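(* Let $(P_X,P_{Y|X})$ be an input/channel pair and $\Theta_0\sim\mathcal U$. Consider the transmission scheme $X_{n+1}=g_{n+1}(\Theta_0,Y^n)$ with $g_{n+1}(\theta,y^n)=F_X^{-1}\big(F_{\Theta_0|Y^n}(\theta\,|\,y^n)\big)$ for $n\ge0$ (so $X_1=F_X^{-1}(\Theta_0)$), used over the memoryless channel $P_{Y|X}$. Then for every $n\ge 0$: the random variable $U_n\triangleq F_{\Theta_0|Y^n}(\Theta_0|Y^n)$ is uniform on $(0,1)$ and statistically independent of $Y^n$; $\Theta_0$ can be a.s. uniquely recovered from $(U_n,Y^n)$; and consequently $X_{n+1}\sim P_X$ and $X_{n+1}$ is independent of $Y^n$.
   Context: All real r.v.'s are mixtures of absolutely continuous and discrete parts. $F_X$ is the c.d.f. of $X$, $F_X^{-1}(t)=\inf\{x:F_X(x)>t\}$; $\mathcal U$ is the uniform distribution on $(0,1)$. A memoryless channel is a conditional distribution $P_{Y|X}$ on $\mathbb R$; its input alphabet is the set of $x$ for which $P_{Y|X}(\cdot|x)$ is defined. An input/channel pair $(P_X,P_{Y|X})$ is one with $\mathrm{supp}(X)$ contained in the input alphabet and $I(X;Y)<\infty$. Transmission over the channel means $P_{Y_n|X^nY^{n-1}}(\cdot|x^n,y^{n-1})=P_{Y|X}(\cdot|x_n)$. $F_{\Theta_0|Y^n}(\cdot|y^n)$ is the posterior c.d.f. of the message point $\Theta_0$ given the outputs $Y^n=y^n$. *)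

theory Defs
  imports "HOL-Probability.Probability"
begin

definition quantile_fn :: "(real \<Rightarrow> real) \<Rightarrow> real \<Rightarrow> real" where
  "quantile_fn F t = Inf {x. F x > t}"

definition measure_support :: "real measure \<Rightarrow> real set" where
  "measure_support \<mu> = {x. \<forall>e>0. emeasure \<mu> (ball x e) > 0}"

text \<open>Standing assumption: a mixture of an absolutely continuous and a discrete part,
  i.e. off some countable set the measure is absolutely continuous w.r.t. Lebesgue.\<close>
definition ac_plus_discrete :: "real measure \<Rightarrow> bool" where
  "ac_plus_discrete \<mu> \<longleftrightarrow> (\<exists>D. countable D \<and>
     (\<forall>S\<in>sets borel. S \<inter> D = {} \<and> emeasure lborel S = 0 \<longrightarrow> emeasure \<mu> S = 0))"

definition joint_law :: "real measure \<Rightarrow> (real \<Rightarrow> real measure) \<Rightarrow> (real \<times> real) measure" where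
  "joint_law PX K = PX \<bind> (\<lambda>x. distr (K x) (borel \<Otimes>\<^sub>M borel) (\<lambda>y. (x, y)))"

text \<open>I(X;Y) < \<infinity>: the joint law is absolutely continuous w.r.t. the product of the marginals
  and the information density ln(dP_XY / d(P_X x P_Y)) is integrable under P_XY
  (equivalently, the mutual information = KL divergence is finite).\<close>
definition finite_mutual_info :: "real measure \<Rightarrow> (real \<Rightarrow> real measure) \<Rightarrow> bool" where
  "finite_mutual_info PX K \<longleftrightarrow>
     (let J = joint_law PX K; Q = PX \<Otimes>\<^sub>M (PX \<bind> K) in
      absolutely_continuous Q J \<and> integrable J (\<lambda>z. ln (enn2real (RN_deriv Q J z))))"

definition Yspace :: "nat \<Rightarrow> (nat \<Rightarrow> real) measure" where
  "Yspace n = PiM {..<n} (\<lambda>_. borel)"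

definition Yvec :: "(nat \<Rightarrow> 'a \<Rightarrow> real) \<Rightarrow> nat \<Rightarrow> 'a \<Rightarrow> (nat \<Rightarrow> real)" where
  "Yvec Y n \<omega> = restrict (\<lambda>i. Y i \<omega>) {..<n}"

end

theory Submission
  imports Defs
begin

(* The heart of the argument is that the joint law of (Theta0, Y^n) has a density with respect to
   Lebesgue measure times the law of Y^n.  Given that, its sections are the conditional laws of
   Theta0 given Y^n = y; they are atomless and, by the posterior hypothesis, have c.d.f. F_post(.|y)
   for almost every y, so the probability integral transform makes U_n uniform conditionally on
   Y^n.  Recovery uses the generalised inverse of the posterior c.d.f., and the claims about X
   follow from the quantile transform.  The density is obtained by induction on n: for n = 0 it
   is the uniform law of Theta0; for the step, finite mutual information makes P_{Y|X=x} absolutely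
   continuous w.r.t. P_Y for P_X-almost every x, and X_{n+1} ~ P_X (from stage n) transfers this
   to the new output. *)

section \<open>Monotone right-continuous functions with limits 0 and 1\<close>

definition cdf_like :: "(real \<Rightarrow> real) \<Rightarrow> bool" where
  "cdf_like F \<longleftrightarrow> mono F \<and> (\<forall>x. continuous (at_right x) F)
     \<and> (F \<longlongrightarrow> 0) at_bot \<and> (F \<longlongrightarrow> 1) at_top"

lemma cdf_like_cdf:
  assumes "real_distribution P"
  shows "cdf_like (cdf P)"
proof -
  interpret real_distribution P by fact
  show ?thesis
    by (auto simp: cdf_like_def mono_def cdf_nondecreasing cdf_is_right_cont
        cdf_lim_at_bot cdf_lim_at_top_prob)
qed

lemma cdf_like_bounds:
  assumes F: "cdf_like F"
  shows "0 \<le> F x" "F x \<le> 1"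
proof -
  have mono: "mono F" and bot: "(F \<longlongrightarrow> 0) at_bot" and top: "(F \<longlongrightarrow> 1) at_top"
    using F by (auto simp: cdf_like_def)
  show "0 \<le> F x"
    by (rule tendsto_upperbound[OF bot])
      (auto simp: eventually_at_bot_linorder intro!: exI[of _ x] monoD[OF mono])
  show "F x \<le> 1"
    by (rule tendsto_lowerbound[OF top])
      (auto simp: eventually_at_top_linorder intro!: exI[of _ x] monoD[OF mono])
qed

lemma cdf_like_level_sets:
  assumes F: "cdf_like F" and u: "0 < u" "u < 1"
  shows "{t. u < F t} \<noteq> {}" "bdd_below {t. u \<le> F t}" "bdd_below {t. u < F t}"
proof -
  have bot: "(F \<longlongrightarrow> 0) at_bot" and top: "(F \<longlongrightarrow> 1) at_top"
    using F by (auto simp: cdf_like_def)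
  have "eventually (\<lambda>t. u < F t) at_top" using order_tendstoD(1)[OF top u(2)] .
  then show "{t. u < F t} \<noteq> {}" by (auto simp: eventually_at_top_linorder)
  have "eventually (\<lambda>t. F t < u) at_bot" using order_tendstoD(2)[OF bot u(1)] .
  then obtain b where b: "\<And>t. t \<le> b \<Longrightarrow> F t < u" by (auto simp: eventually_at_bot_linorder)
  have "b \<le> t" if "u \<le> F t" for t
    using b[of t] that by (cases "t \<le> b") auto
  then show bdd: "bdd_below {t. u \<le> F t}" by (intro bdd_belowI) auto
  show "bdd_below {t. u < F t}" by (rule bdd_below_mono[OF bdd]) auto
qed

text \<open>The left-continuous generalised inverse \<open>F\<^sup>-(u) = inf {t. u \<le> F t}\<close>; it is used to
  recover the message point from its posterior c.d.f. value.\<close>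
definition cdf_inverse :: "(real \<Rightarrow> real) \<Rightarrow> real \<Rightarrow> real" where
  "cdf_inverse F u = Inf {t. u \<le> F t}"

lemma cdf_inverse_le_iff:
  assumes F: "cdf_like F" and u: "0 < u" "u < 1"
  shows "cdf_inverse F u \<le> x \<longleftrightarrow> u \<le> F x"
proof
  let ?S = "{t. u \<le> F t}"
  have ne: "?S \<noteq> {}"
    using cdf_like_level_sets(1)[OF F u] by auto (meson less_imp_le)
  have mono: "mono F" and rc: "continuous (at_right x) F"
    using F by (auto simp: cdf_like_def)
  assume le: "cdf_inverse F u \<le> x"
  show "u \<le> F x"
  proof (rule ccontr)
    assume "\<not> u \<le> F x"
    then have "eventually (\<lambda>z. F z < u) (at_right x)"
      using rc by (simp add: continuous_within order_tendstoD(2))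
    then obtain c where c: "c > x" "\<And>z. x < z \<Longrightarrow> z < c \<Longrightarrow> F z < u"
      by (auto simp: eventually_at_right_field)
    define d where "d = (x + c) / 2"
    have d: "x < d" "F d < u" using c by (auto simp: d_def)
    have "d \<le> z" if "z \<in> ?S" for z
      using that d monoD[OF mono, of z d] by (cases "z \<le> d") auto
    then have "d \<le> Inf ?S" using ne by (intro cInf_greatest) auto
    with le d show False by (simp add: cdf_inverse_def)
  qed
next
  assume "u \<le> F x"
  then show "cdf_inverse F u \<le> x"
    unfolding cdf_inverse_def using cdf_like_level_sets(2)[OF F u] by (intro cInf_lower) auto
qed

lemma quantile_le:
  assumes F: "cdf_like F" and u: "0 < u" "u < 1"
  shows "u < F x \<Longrightarrow> quantile_fn F u \<le> x" and "quantile_fn F u \<le> x \<Longrightarrow> u \<le> F x"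
proof -
  note sets = cdf_like_level_sets[OF F u]
  show "u < F x \<Longrightarrow> quantile_fn F u \<le> x"
    unfolding quantile_fn_def using sets(3) by (intro cInf_lower) auto
  have "cdf_inverse F u \<le> quantile_fn F u"
    unfolding cdf_inverse_def quantile_fn_def by (rule cInf_superset_mono[OF sets(1,2)]) auto
  then show "quantile_fn F u \<le> x \<Longrightarrow> u \<le> F x"
    using cdf_inverse_le_iff[OF F u] by (meson order_trans)
qed

text \<open>The quantile function is Borel: it is monotone on \<open>(0,1)\<close> and piecewise constant
  outside.\<close>
lemma quantile_measurable:
  assumes F: "cdf_like F"
  shows "quantile_fn F \<in> borel_measurable borel"
proof -
  have b: "0 \<le> F x" "F x \<le> 1" for x using cdf_like_bounds[OF F] by auto
  text \<open>Outside \<open>(0,1)\<close> the quantile function only takes three constant values.\<close>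
  let ?g = "\<lambda>t::real. if t < 0 then Inf (UNIV::real set)
      else if t = 0 then quantile_fn F 0 else Inf ({}::real set)"
  have eq: "quantile_fn F = (\<lambda>t. if t \<in> {0<..<1} then quantile_fn F t else ?g t)"
  proof
    fix t :: real
    show "quantile_fn F t = (if t \<in> {0<..<1} then quantile_fn F t else ?g t)"
    proof (cases "t \<in> {0<..<1}")
      case False
      show ?thesis
      proof (cases "t < 0")
        case True
        then have "{z. F z > t} = UNIV" by (force intro: less_le_trans[OF True b(1)])
        then show ?thesis using True by (simp add: quantile_fn_def)
      next
        case F1: False
        show ?thesis
        proof (cases "t = 0")
          case False
          with F1 \<open>t \<notin> _\<close> have "t \<ge> 1" by auto
          then have "{z. F z > t} = {}" using b by (auto simp: not_less intro: order_trans)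
          then show ?thesis using F1 False by (simp add: quantile_fn_def)
        qed simp
      qed
    qed simp
  qed
  have mono: "mono_on {0<..<1} (quantile_fn F)"
  proof (rule mono_onI)
    fix s t :: real assume st: "s \<in> {0<..<1}" "t \<in> {0<..<1}" "s \<le> t"
    then have "{z. t < F z} \<noteq> {}" "bdd_below {z. s < F z}"
      using cdf_like_level_sets[OF F] by auto
    then show "quantile_fn F s \<le> quantile_fn F t"
      unfolding quantile_fn_def by (rule cInf_superset_mono) (use st in auto)
  qed
  have m1: "quantile_fn F \<in> borel_measurable (restrict_space borel {x. x \<in> {0<..<1}})"
    using borel_measurable_mono_on_fnc[OF mono] by (simp only: Collect_mem_eq)
  have m2: "?g \<in> borel_measurable (restrict_space borel {x. x \<notin> {0<..<1}})"
    by (rule measurable_restrict_space1) measurable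
  show ?thesis
    by (subst eq, subst measurable_If_restrict_space_iff) (use m1 m2 in auto)
qed

section \<open>Right-continuous functions and rational approximation\<close>

lemma rat_seq_at_right:
  fixes x :: real
  obtains r where "\<And>m. r m \<in> \<rat>" "filterlim r (at_right x) sequentially"
proof -
  have "\<exists>r\<in>\<rat>. x < r \<and> r < x + 1 / real (Suc m)" for m
    by (rule Rats_dense_in_real) auto
  then obtain r where r: "\<And>m. r m \<in> \<rat>" "\<And>m. x < r m" "\<And>m. r m < x + 1 / real (Suc m)"
    by metis
  have "(\<lambda>m. x + inverse (real (Suc m))) \<longlonglongrightarrow> x + 0"
    by (intro tendsto_intros LIMSEQ_inverse_real_of_nat)
  then have upper: "(\<lambda>m. x + 1 / real (Suc m)) \<longlonglongrightarrow> x" by (simp add: divide_inverse)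
  have "r \<longlonglongrightarrow> x"
    by (rule tendsto_sandwich[OF _ _ tendsto_const upper])
      (auto intro!: always_eventually less_imp_le r(2) r(3)[unfolded of_nat_Suc])
  then have "filterlim r (at_right x) sequentially"
    using r by (auto simp: filterlim_at intro!: always_eventually less_imp_neq[symmetric])
  then show thesis by (rule that[OF r(1)])
qed

lemma right_continuous_eq_on_rats:
  fixes f g :: "real \<Rightarrow> real"
  assumes f: "continuous (at_right x) f" and g: "continuous (at_right x) g"
    and eq: "\<And>r. f (of_rat r) = g (of_rat r)"
  shows "f x = g x"
proof -
  obtain r where r: "\<And>m. r m \<in> \<rat>" and lim: "filterlim r (at_right x) sequentially"
    using rat_seq_at_right[of x] by blast
  have "(\<lambda>m. f (r m)) \<longlonglongrightarrow> f x"
    using f lim by (simp add: continuous_within) (metis filterlim_compose)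
  moreover have "(\<lambda>m. g (r m)) \<longlonglongrightarrow> g x"
    using g lim by (simp add: continuous_within) (metis filterlim_compose)
  moreover have "f (r m) = g (r m)" for m
    using r[of m] eq by (auto elim!: Rats_cases)
  ultimately show ?thesis using LIMSEQ_unique by auto
qed

lemma grid_approx_at_right:
  fixes t :: real
  shows "filterlim (\<lambda>m. (real_of_int \<lceil>t * real (Suc m)\<rceil> + 1) / real (Suc m)) (at_right t) sequentially"
proof -
  define c where "c m = (real_of_int \<lceil>t * real (Suc m)\<rceil> + 1) / real (Suc m)" for m :: nat
  have lower: "t < c m" for m
  proof -
    have "t * real (Suc m) < real_of_int \<lceil>t * real (Suc m)\<rceil> + 1" by linarith
    then show ?thesis unfolding c_def by (simp add: field_simps)
  qed
  have upper: "c m \<le> t + 2 / real (Suc m)" for m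
  proof -
    have "real_of_int \<lceil>t * real (Suc m)\<rceil> + 1 \<le> t * real (Suc m) + 2" by linarith
    then have "(real_of_int \<lceil>t * real (Suc m)\<rceil> + 1) / real (Suc m)
        \<le> (t * real (Suc m) + 2) / real (Suc m)"
      by (rule divide_right_mono) simp
    also have "\<dots> = t + 2 / real (Suc m)" by (simp add: field_simps)
    finally show ?thesis unfolding c_def .
  qed
  have "(\<lambda>m. t + 2 * inverse (real (Suc m))) \<longlonglongrightarrow> t + 2 * 0"
    by (intro tendsto_intros LIMSEQ_inverse_real_of_nat)
  then have upper_lim: "(\<lambda>m. t + 2 / real (Suc m)) \<longlonglongrightarrow> t" by (simp add: divide_inverse)
  have "c \<longlonglongrightarrow> t"
    by (rule tendsto_sandwich[OF _ _ tendsto_const upper_lim])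
      (auto intro!: always_eventually less_imp_le[OF lower] upper[unfolded of_nat_Suc])
  then show ?thesis
    unfolding c_def[symmetric]
    using lower by (auto simp: filterlim_at intro!: always_eventually less_imp_neq[symmetric])
qed

text \<open>A family of right-continuous functions \<open>G y\<close> depending measurably on \<open>y\<close> is jointly
  measurable: \<open>G y t\<close> is the limit of \<open>G y (c\<^sub>m t)\<close> for the grid approximations \<open>c\<^sub>m t\<close> of \<open>t\<close>
  from the right, and \<open>c\<^sub>m\<close> takes countably many values on measurable pieces.\<close>
lemma measurable_right_continuous_family:
  fixes G :: "'b \<Rightarrow> real \<Rightarrow> real"
  assumes meas: "\<And>\<theta>. (\<lambda>y. G y \<theta>) \<in> borel_measurable N"
    and rc: "\<And>y \<theta>. continuous (at_right \<theta>) (G y)"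
  shows "(\<lambda>p. G (snd p) (fst p)) \<in> borel_measurable (borel \<Otimes>\<^sub>M N)"
proof (rule borel_measurable_LIMSEQ_real)
  define c where "c m t = (real_of_int \<lceil>t * real (Suc m)\<rceil> + 1) / real (Suc m)"
    for m :: nat and t :: real
  show "(\<lambda>p. G (snd p) (c m (fst p))) \<in> borel_measurable (borel \<Otimes>\<^sub>M N)" for m
  proof -
    have "(\<lambda>p. (\<lambda>i::int. \<lambda>p. G (snd p) ((real_of_int i + 1) / real (Suc m)))
        (\<lceil>fst p * real (Suc m)\<rceil>) p) \<in> borel_measurable (borel \<Otimes>\<^sub>M N)"
    proof (rule measurable_compose_countable[where
        f="\<lambda>i p. G (snd p) ((real_of_int i + 1) / real (Suc m))"
        and g="\<lambda>p. \<lceil>fst p * real (Suc m)\<rceil>"])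
      show "(\<lambda>p. G (snd p) ((real_of_int i + 1) / real (Suc m))) \<in> borel_measurable (borel \<Otimes>\<^sub>M N)"
        for i
        by (rule measurable_compose[OF measurable_snd meas])
      show "(\<lambda>p. \<lceil>fst p * real (Suc m)\<rceil>) \<in> measurable (borel \<Otimes>\<^sub>M N) (count_space UNIV)"
        by measurable
    qed
    then show ?thesis by (simp add: c_def)
  qed
  show "(\<lambda>m. G (snd p) (c m (fst p))) \<longlonglongrightarrow> G (snd p) (fst p)" for p :: "real \<times> 'b"
  proof -
    have "(G (snd p) \<longlongrightarrow> G (snd p) (fst p)) (at_right (fst p))"
      using rc[of "fst p" "snd p"] by (simp add: continuous_within)
    from filterlim_compose[OF this grid_approx_at_right[of "fst p"]] show ?thesis
      by (simp add: c_def)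
  qed
qed

section \<open>The uniform distribution on (0,1)\<close>

abbreviation Unif :: "real measure" where
  "Unif \<equiv> uniform_measure lborel {0<..<1::real}"

lemma prob_space_Unif: "prob_space Unif"
  by (rule prob_space_uniform_measure) auto

lemma real_distribution_Unif: "real_distribution Unif"
  using prob_space_Unif by (simp add: real_distribution_def real_distribution_axioms_def)

lemma sets_Unif[simp, measurable_cong]: "sets Unif = sets borel"
  by simp

lemma emeasure_Unif: "B \<in> sets borel \<Longrightarrow> emeasure Unif B = emeasure lborel ({0<..<1} \<inter> B)"
  by (subst emeasure_uniform_measure) (auto simp: divide_ennreal_def)

lemma measure_Unif: "B \<in> sets borel \<Longrightarrow> measure Unif B = measure lborel ({0<..<1} \<inter> B)"
  by (simp add: measure_def divide_ennreal_def)

lemma cdf_Unif: "cdf Unif u = max 0 (min 1 u)"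
proof -
  have "cdf Unif u = measure lborel ({0<..<1} \<inter> {..u})" by (simp add: cdf_def measure_Unif)
  also have "\<dots> = max 0 (min 1 u)"
  proof (cases "u \<le> 0")
    case True then have "{0<..<1} \<inter> {..u} = {}" by auto
    then show ?thesis using True by simp
  next
    case False
    show ?thesis
    proof (cases "u < 1")
      case True then have "{0<..<1} \<inter> {..u} = {0<..u}" by auto
      then show ?thesis using True False by simp
    next
      case F2: False then have "{0<..<1} \<inter> {..u} = {0<..<1::real}" by auto
      then show ?thesis using F2 by simp
    qed
  qed
  finally show ?thesis .
qed

lemma emeasure_Unif_atMost: "0 \<le> c \<Longrightarrow> c \<le> 1 \<Longrightarrow> emeasure Unif {..c} = ennreal c"
proof -
  interpret prob_space Unif by (rule prob_space_Unif)
  assume "0 \<le> c" "c \<le> 1"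
  then show ?thesis using cdf_Unif[of c] by (simp add: cdf_def emeasure_eq_measure)
qed

lemma AE_Unif_Ioo: "AE u in Unif. 0 < u \<and> u < 1"
proof -
  have "emeasure Unif (- {0<..<1}) = 0" by (simp add: emeasure_Unif)
  then show ?thesis by (intro AE_I[of _ _ "- {0<..<1}"]) auto
qed

section \<open>Quantile transform and probability integral transform\<close>

lemma quantile_transform:
  assumes P: "real_distribution P"
  shows "distr Unif borel (quantile_fn (cdf P)) = P"
proof -
  interpret U: prob_space Unif by (rule prob_space_Unif)
  let ?F = "cdf P" and ?q = "quantile_fn (cdf P)"
  have F: "cdf_like ?F" by (rule cdf_like_cdf[OF P])
  have qm: "?q \<in> measurable Unif borel"
    using quantile_measurable[OF F] by (simp cong: measurable_cong_sets)
  have "cdf (distr Unif borel ?q) x = ?F x" for x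
  proof -
    let ?B = "?q -` {..x}"
    have B: "?B \<in> sets borel" using measurable_sets[OF qm, of "{..x}"] by simp
    have Fx: "0 \<le> ?F x" "?F x \<le> 1" using cdf_like_bounds[OF F] by auto
    have "measure Unif {..<?F x} = measure Unif ({0<..<1} \<inter> {..<?F x})"
      by (simp add: measure_Unif Int_assoc[symmetric] Int_absorb)
    also have "\<dots> \<le> measure Unif ?B"
      by (rule U.finite_measure_mono) (use quantile_le(1)[OF F] B in auto)
    finally have lower: "measure Unif {..<?F x} \<le> measure Unif ?B" .
    have "measure Unif ?B = measure Unif ({0<..<1} \<inter> ?B)"
      using B by (simp add: measure_Unif Int_assoc[symmetric] Int_absorb)
    also have "\<dots> \<le> measure Unif {..?F x}"
      by (rule U.finite_measure_mono) (use quantile_le(2)[OF F] in auto)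
    finally have upper: "measure Unif ?B \<le> measure Unif {..?F x}" .
    have "{0<..<1} \<inter> {..<?F x} = {0<..<?F x}" using Fx by auto
    then have "measure Unif {..<?F x} = ?F x" using Fx by (simp add: measure_Unif)
    moreover have "measure Unif {..?F x} = ?F x" using cdf_Unif[of "?F x"] Fx by (simp add: cdf_def)
    ultimately show ?thesis
      using lower upper qm by (simp add: cdf_def measure_distr vimage_def)
  qed
  then show ?thesis
    using cdf_unique[OF U.real_distribution_distr[OF qm] P] by blast
qed

lemma continuous_cdf_like_sublevel:
  assumes F: "cdf_like F" and cont: "\<And>x. isCont F x" and u: "u < 1"
    and ne: "{t. F t \<le> u} \<noteq> {}"
  obtains s where "{t. F t \<le> u} = {..s}" "F s = u"
proof -
  let ?S = "{t. F t \<le> u}"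
  have mono: "mono F" and top: "(F \<longlongrightarrow> 1) at_top" using F by (auto simp: cdf_like_def)
  have "eventually (\<lambda>t. F t > u) at_top" using order_tendstoD(1)[OF top u] .
  then obtain c where c: "\<And>t. t \<ge> c \<Longrightarrow> F t > u" by (auto simp: eventually_at_top_linorder)
  have bdd: "bdd_above ?S"
    by (rule bdd_aboveI[of _ c]) (metis c linorder_not_le mem_Collect_eq less_imp_le)
  have closed: "closed ?S"
    by (rule closed_Collect_le) (auto intro: continuous_at_imp_continuous_on cont)
  define s where "s = Sup ?S"
  have sS: "s \<in> ?S" unfolding s_def by (rule closed_contains_Sup[OF ne bdd closed])
  have S_eq: "?S = {..s}"
  proof
    show "?S \<subseteq> {..s}" unfolding s_def using bdd by (auto intro: cSup_upper)
    show "{..s} \<subseteq> ?S" using sS monoD[OF mono] by (auto intro: order_trans)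
  qed
  have "F s = u"
  proof (rule ccontr)
    assume "F s \<noteq> u"
    then have "F s < u" using sS by simp
    then have "eventually (\<lambda>t. F t < u) (at s)"
      using cont[of s] by (simp add: isCont_def order_tendstoD(2))
    then have "eventually (\<lambda>t. F t < u) (at_right s)"
      by (rule eventually_at_split[THEN iffD1, THEN conjunct2])
    then obtain e where e: "e > s" "\<And>t. s < t \<Longrightarrow> t < e \<Longrightarrow> F t < u"
      by (auto simp: eventually_at_right_field)
    have "(s + e) / 2 \<in> ?S" using e by (auto intro!: less_imp_le)
    with S_eq e show False by auto
  qed
  with S_eq show thesis by (rule that)
qed

lemma measure_cdf_sublevel:
  assumes L: "real_distribution L" and atomless: "\<And>x. measure L {x} = 0"
  shows "measure L {t. cdf L t \<le> u} = max 0 (min 1 u)"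
proof -
  interpret L: real_distribution L by fact
  let ?F = "cdf L" and ?S = "{t. cdf L t \<le> u}"
  have F: "cdf_like ?F" by (rule cdf_like_cdf[OF L])
  have b: "0 \<le> ?F x" "?F x \<le> 1" for x using cdf_like_bounds[OF F] by auto
  consider "u < 0" | "1 \<le> u" | "0 \<le> u" "u < 1" "?S = {}" | "u < 1" "?S \<noteq> {}" by linarith
  then show ?thesis
  proof cases
    case 1
    then have "?S = {}" using b by (auto simp: not_le intro: less_le_trans)
    then show ?thesis using 1 by simp
  next
    case 2
    then have "?S = UNIV" using b by (auto intro: order_trans)
    then show ?thesis using 2 L.prob_space by simp
  next
    case 3
    have "u = 0"
    proof (rule ccontr)
      assume "u \<noteq> 0"
      then have "eventually (\<lambda>t. ?F t < u) at_bot"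
        using 3 L.cdf_lim_at_bot by (intro order_tendstoD(2)) auto
      then obtain d where "\<And>t. t \<le> d \<Longrightarrow> ?F t < u" by (auto simp: eventually_at_bot_linorder)
      then have "d \<in> ?S" by (simp add: less_imp_le)
      with 3 show False by simp
    qed
    then show ?thesis using 3 by simp
  next
    case 4
    have "isCont ?F x" for x using L.isCont_cdf atomless by simp
    then obtain s where "?S = {..s}" "?F s = u"
      using continuous_cdf_like_sublevel[OF F] 4 by blast
    moreover from this have "0 \<le> u" using b by metis
    ultimately show ?thesis using 4 by (simp add: cdf_def)
  qed
qed

lemma probability_integral_transform:
  assumes L: "real_distribution L" and atomless: "\<And>x. measure L {x} = 0"
  shows "distr L borel (cdf L) = Unif"
proof -
  interpret L: real_distribution L by fact
  have Fm: "cdf L \<in> borel_measurable L"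
    using borel_measurable_mono[of "cdf L"] cdf_like_cdf[OF L]
    by (simp add: cdf_like_def cong: measurable_cong_sets)
  have "cdf (distr L borel (cdf L)) u = cdf Unif u" for u
    using measure_cdf_sublevel[OF L atomless, of u] Fm
    by (simp add: cdf_def measure_distr vimage_def cdf_Unif[unfolded cdf_def])
  then show ?thesis
    using cdf_unique[OF L.real_distribution_distr[OF Fm] real_distribution_Unif] by blast
qed

section \<open>Channels with finite mutual information\<close>

lemma subprob_kernel_at:
  assumes "K \<in> borel \<rightarrow>\<^sub>M subprob_algebra borel"
  shows "subprob_space (K x)" "sets (K x) = sets borel"
  using measurable_space[OF assms, of x] by (auto simp: space_subprob_algebra)

lemma finite_borel_measure_eq_rat:
  fixes M1 M2 :: "real measure"
  assumes M1: "finite_borel_measure M1" and M2: "finite_borel_measure M2"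
    and eq: "\<And>\<rho>::rat. emeasure M1 {..of_rat \<rho>} = emeasure M2 {..of_rat \<rho>}"
  shows "M1 = M2"
proof (rule cdf_unique'[OF M1 M2])
  show "cdf M1 = cdf M2"
  proof
    fix t
    show "cdf M1 t = cdf M2 t"
    proof (rule right_continuous_eq_on_rats[where f="cdf M1" and g="cdf M2"])
      show "continuous (at_right t) (cdf M1)" "continuous (at_right t) (cdf M2)"
        using finite_borel_measure.cdf_is_right_cont[OF M1] finite_borel_measure.cdf_is_right_cont[OF M2]
        by auto
      show "cdf M1 (of_rat \<rho>) = cdf M2 (of_rat \<rho>)" for \<rho>
        using eq[of \<rho>] by (simp add: cdf_def measure_def)
    qed
  qed
qed

context
  fixes PX :: "real measure" and K :: "real \<Rightarrow> real measure"
  assumes PX: "prob_space PX" "sets PX = sets borel"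
    and K: "K \<in> borel \<rightarrow>\<^sub>M subprob_algebra borel"
begin

lemma space_input_law: "space PX = UNIV"
  using sets_eq_imp_space_eq[OF PX(2)] by simp

lemma kernel_measurable_input: "K \<in> measurable PX (subprob_algebra borel)"
  by (subst measurable_cong_sets[OF PX(2) refl]) (rule K)

lemma output_law: "subprob_space (PX \<bind> K)" "sets (PX \<bind> K) = sets borel"
proof -
  show "subprob_space (PX \<bind> K)"
    by (rule subprob_space_bind[OF _ kernel_measurable_input])
      (use PX(1) prob_space_imp_subprob_space in auto)
  show "sets (PX \<bind> K) = sets borel"
    by (rule sets_bind[OF subprob_kernel_at(2)[OF K]]) (simp add: space_input_law)
qed

lemma space_output_law: "space (PX \<bind> K) = UNIV"
  using sets_eq_imp_space_eq[OF output_law(2)] by simp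

lemma sets_joint_law: "sets (joint_law PX K) = sets (borel \<Otimes>\<^sub>M borel)"
  unfolding joint_law_def by (rule sets_bind) (auto simp: space_input_law)

lemma joint_law_Times:
  assumes A: "A \<in> sets borel" and C: "C \<in> sets borel"
  shows "emeasure (joint_law PX K) (A \<times> C) = (\<integral>\<^sup>+x. emeasure (K x) C * indicator A x \<partial>PX)"
proof -
  have K_Pair: "(\<lambda>x. distr (K x) (borel \<Otimes>\<^sub>M borel) (Pair x))
      \<in> measurable PX (subprob_algebra (borel \<Otimes>\<^sub>M borel))"
  proof (rule measurable_distr2[where f="\<lambda>x y. (x, y)", OF _ kernel_measurable_input])
    show "(\<lambda>(x, y). (x, y)) \<in> measurable (PX \<Otimes>\<^sub>M borel) (borel \<Otimes>\<^sub>M borel)"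
      by (simp add: measurable_cong_sets[OF sets_pair_measure_cong[OF PX(2) refl] refl]
          case_prod_beta')
  qed
  have "emeasure (joint_law PX K) (A \<times> C)
      = (\<integral>\<^sup>+x. emeasure (distr (K x) (borel \<Otimes>\<^sub>M borel) (Pair x)) (A \<times> C) \<partial>PX)"
    unfolding joint_law_def using A C
    by (intro emeasure_bind[OF _ K_Pair]) (auto simp: space_input_law)
  also have "\<dots> = (\<integral>\<^sup>+x. emeasure (K x) C * indicator A x \<partial>PX)"
  proof (rule nn_integral_cong)
    fix x
    have Kx: "sets (K x) = sets borel" by (rule subprob_kernel_at(2)[OF K])
    have "emeasure (distr (K x) (borel \<Otimes>\<^sub>M borel) (Pair x)) (A \<times> C)
        = emeasure (K x) (Pair x -` (A \<times> C) \<inter> space (K x))"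
      using A C by (intro emeasure_distr) (auto simp: measurable_cong_sets[OF Kx refl])
    also have "\<dots> = emeasure (K x) C * indicator A x"
      using sets_eq_imp_space_eq[OF Kx] C by (auto simp: indicator_def)
    finally show "emeasure (distr (K x) (borel \<Otimes>\<^sub>M borel) (Pair x)) (A \<times> C)
        = emeasure (K x) C * indicator A x" .
  qed
  finally show ?thesis .
qed

text \<open>Finite mutual information includes absolute continuity of the joint law w.r.t. the
  product of its marginals; this is all that is used of it.\<close>
context
  assumes joint_ac: "absolutely_continuous (PX \<Otimes>\<^sub>M (PX \<bind> K)) (joint_law PX K)"
begin

lemma channel_disintegration:
  defines "r \<equiv> RN_deriv (PX \<Otimes>\<^sub>M (PX \<bind> K)) (joint_law PX K)"
  assumes C: "C \<in> sets borel"
  shows "AE x in PX. emeasure (K x) C = (\<integral>\<^sup>+y. r (x, y) * indicator C y \<partial>(PX \<bind> K))"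
proof -
  let ?PY = "PX \<bind> K" let ?Q = "PX \<Otimes>\<^sub>M ?PY"
  note [measurable_cong] = PX(2) output_law(2)
  interpret PX: prob_space PX by (rule PX(1))
  interpret PY: subprob_space ?PY by (rule output_law(1))
  interpret PS: pair_sigma_finite PX ?PY
    by (intro pair_sigma_finite.intro PX.sigma_finite_measure_axioms PY.sigma_finite_measure_axioms)
  have sets_Q: "sets ?Q = sets (borel \<Otimes>\<^sub>M borel)"
    by (rule sets_pair_measure_cong) (auto simp: PX(2) output_law(2))
  have r_meas[measurable]: "r \<in> borel_measurable ?Q"
    unfolding r_def by (rule borel_measurable_RN_deriv)
  have density_r: "density ?Q r = joint_law PX K"
    unfolding r_def
    by (rule sigma_finite_measure.density_RN_deriv[OF PS.sigma_finite_measure_axioms joint_ac])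
      (simp only: sets_joint_law sets_Q)
  have K_C: "(\<lambda>x. emeasure (K x) C) \<in> borel_measurable PX"
    using measurable_compose[OF kernel_measurable_input measurable_emeasure_subprob_algebra] C
    by (simp add: output_law(2))
  have r_C: "(\<lambda>x. \<integral>\<^sup>+y. r (x, y) * indicator C y \<partial>?PY) \<in> borel_measurable PX"
    by (rule PY.borel_measurable_nn_integral) (use C output_law(2) in measurable)
  have "density PX (\<lambda>x. emeasure (K x) C) = density PX (\<lambda>x. \<integral>\<^sup>+y. r (x, y) * indicator C y \<partial>?PY)"
  proof (rule measure_eqI)
    fix A assume "A \<in> sets (density PX (\<lambda>x. emeasure (K x) C))"
    then have A: "A \<in> sets borel" by (simp add: PX(2))
    have AC: "A \<times> C \<in> sets ?Q" unfolding sets_Q using A C by auto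
    have "emeasure (density PX (\<lambda>x. emeasure (K x) C)) A
        = (\<integral>\<^sup>+x. emeasure (K x) C * indicator A x \<partial>PX)"
      using A K_C by (subst emeasure_density) (auto simp: PX(2))
    also have "\<dots> = emeasure (density ?Q r) (A \<times> C)"
      using joint_law_Times[OF A C] density_r by simp
    also have "\<dots> = (\<integral>\<^sup>+z. r z * indicator (A \<times> C) z \<partial>?Q)"
      by (rule emeasure_density[OF r_meas AC])
    also have "\<dots> = (\<integral>\<^sup>+x. \<integral>\<^sup>+y. r (x, y) * indicator (A \<times> C) (x, y) \<partial>?PY \<partial>PX)"
      by (rule PY.nn_integral_fst[symmetric]) (use AC in measurable)
    also have "\<dots> = (\<integral>\<^sup>+x. (\<integral>\<^sup>+y. r (x, y) * indicator C y \<partial>?PY) * indicator A x \<partial>PX)"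
      by (intro nn_integral_cong) (auto simp: indicator_def)
    also have "\<dots> = emeasure (density PX (\<lambda>x. \<integral>\<^sup>+y. r (x, y) * indicator C y \<partial>?PY)) A"
      using A r_C by (subst emeasure_density) (auto simp: PX(2))
    finally show "emeasure (density PX (\<lambda>x. emeasure (K x) C)) A
        = emeasure (density PX (\<lambda>x. \<integral>\<^sup>+y. r (x, y) * indicator C y \<partial>?PY)) A" .
  qed simp
  then show ?thesis by (rule PX.density_unique[OF K_C r_C])
qed

text \<open>Hence almost every channel law is absolutely continuous w.r.t. the output law: by the
  disintegration on the countably many rational half-lines and on the whole line, \<open>K x\<close> equals
  the density measure \<open>r(x,\<cdot>) \<cdot> P\<^sub>Y\<close>.\<close>
lemma channel_ac_output_law: "AE x in PX. absolutely_continuous (PX \<bind> K) (K x)"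
proof -
  let ?PY = "PX \<bind> K"
  define r where "r = RN_deriv (PX \<Otimes>\<^sub>M ?PY) (joint_law PX K)"
  interpret PY: subprob_space ?PY by (rule output_law(1))
  have r_sec: "(\<lambda>y. r (x, y)) \<in> borel_measurable ?PY" for x
  proof -
    have "r \<in> borel_measurable (PX \<Otimes>\<^sub>M ?PY)" unfolding r_def by (rule borel_measurable_RN_deriv)
    then show ?thesis using measurable_Pair1[of r PX ?PY borel x] space_input_law by simp
  qed
  have "AE x in PX. (\<forall>\<rho>::rat. emeasure (K x) {..of_rat \<rho>}
        = (\<integral>\<^sup>+y. r (x, y) * indicator {..of_rat \<rho>} y \<partial>?PY))
      \<and> emeasure (K x) UNIV = (\<integral>\<^sup>+y. r (x, y) * indicator UNIV y \<partial>?PY)"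
    using channel_disintegration[of UNIV] channel_disintegration[of "{..of_rat _}"]
    by (auto simp: r_def AE_all_countable simp del: indicator_UNIV)
  then show ?thesis
  proof (rule eventually_mono, elim conjE)
    fix x
    assume rat: "\<forall>\<rho>::rat. emeasure (K x) {..of_rat \<rho>} = (\<integral>\<^sup>+y. r (x, y) * indicator {..of_rat \<rho>} y \<partial>?PY)"
      and total: "emeasure (K x) UNIV = (\<integral>\<^sup>+y. r (x, y) * indicator UNIV y \<partial>?PY)"
    let ?D = "density ?PY (\<lambda>y. r (x, y))"
    have D: "emeasure ?D C = (\<integral>\<^sup>+y. r (x, y) * indicator C y \<partial>?PY)" if "C \<in> sets borel" for C
      using that r_sec[of x] by (subst emeasure_density) (auto simp: output_law(2))
    interpret Kx: subprob_space "K x" by (rule subprob_kernel_at(1)[OF K])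
    have Kx_sets: "sets (K x) = sets borel" by (rule subprob_kernel_at(2)[OF K])
    have fbK: "finite_borel_measure (K x)"
      by (intro finite_borel_measure.intro Kx.finite_measure_axioms)
        (simp add: finite_borel_measure_axioms_def Kx_sets)
    have "emeasure ?D (space ?D) \<noteq> \<infinity>"
      using total D[of UNIV] sets_eq_imp_space_eq[OF Kx_sets] Kx.emeasure_finite[of UNIV]
      by (simp add: space_output_law)
    moreover have "sets ?D = sets borel" by (simp add: output_law(2))
    ultimately have fbD: "finite_borel_measure ?D"
      by (intro finite_borel_measure.intro finite_measureI) (simp_all add: finite_borel_measure_axioms_def)
    have "K x = ?D"
      by (rule finite_borel_measure_eq_rat[OF fbK fbD]) (simp add: rat D)
    then show "absolutely_continuous ?PY (K x)"
      using absolutely_continuousI_density[OF r_sec] by simp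
  qed
qed

end

end

section \<open>Output prefixes\<close>

lemma Yvec_measurable:
  assumes "\<And>i. Y i \<in> borel_measurable M"
  shows "Yvec Y n \<in> measurable M (Yspace n)"
proof -
  have "(\<lambda>\<omega>. \<lambda>i\<in>{..<n}. Y i \<omega>) \<in> measurable M (Pi\<^sub>M {..<n} (\<lambda>_. borel))"
    using assms by (intro measurable_restrict) auto
  then show ?thesis by (simp add: Yvec_def[abs_def] Yspace_def)
qed

lemma Yvec_Suc: "Yvec Y (Suc n) \<omega> = (Yvec Y n \<omega>)(n := Y n \<omega>)"
  by (auto simp: Yvec_def)

lemma space_Yspace_0: "space (Yspace 0) = {\<lambda>_. undefined}"
  by (simp add: Yspace_def space_PiM_empty)

lemma append_output_measurable:
  "(\<lambda>p. (fst p)(n := snd p)) \<in> measurable (Yspace n \<Otimes>\<^sub>M borel) (Yspace (Suc n))"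
  unfolding Yspace_def
proof (rule measurable_PiM_single')
  fix i assume i: "i \<in> {..<Suc n}"
  show "(\<lambda>p. ((fst p)(n := snd p)) i) \<in> borel_measurable (Pi\<^sub>M {..<n} (\<lambda>_. borel) \<Otimes>\<^sub>M borel)"
  proof (cases "i = n")
    case False
    then have "i \<in> {..<n}" using i by auto
    then have "(\<lambda>p. fst p i) \<in> borel_measurable (Pi\<^sub>M {..<n} (\<lambda>_. borel) \<Otimes>\<^sub>M borel)"
      by measurable
    then show ?thesis using False by simp
  qed simp
next
  show "(\<lambda>p. (fst p)(n := snd p)) \<in> space (Pi\<^sub>M {..<n} (\<lambda>_. borel) \<Otimes>\<^sub>M borel)
      \<rightarrow> (\<Pi>\<^sub>E i\<in>{..<Suc n}. space borel)"
    by (auto simp: space_pair_measure space_PiM PiE_iff extensional_def split: if_split_asm)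
      (metis less_SucI)
qed

lemma (in pair_sigma_finite) AE_null_sections:
  assumes S: "S \<in> null_sets (M1 \<Otimes>\<^sub>M M2)"
  shows "AE x in M1. emeasure M2 (Pair x -` S) = 0"
    and "AE y in M2. emeasure M1 ((\<lambda>x. (x, y)) -` S) = 0"
proof -
  have S': "S \<in> sets (M1 \<Otimes>\<^sub>M M2)" and S0: "emeasure (M1 \<Otimes>\<^sub>M M2) S = 0"
    using S by auto
  have "(\<integral>\<^sup>+x. emeasure M2 (Pair x -` S) \<partial>M1) = 0"
    using S0 M2.emeasure_pair_measure_alt[OF S'] by simp
  then show "AE x in M1. emeasure M2 (Pair x -` S) = 0"
    using nn_integral_0_iff_AE[OF M2.measurable_emeasure_Pair[OF S']] by simp
  have "(\<integral>\<^sup>+y. emeasure M1 ((\<lambda>x. (x, y)) -` S) \<partial>M2) = 0"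
    using S0 emeasure_pair_measure_alt2[OF S'] by simp
  then show "AE y in M2. emeasure M1 ((\<lambda>x. (x, y)) -` S) = 0"
    using nn_integral_0_iff_AE[OF measurable_emeasure_Pair2[OF S']] by simp
qed

lemma null_sets_pair3_first_sections:
  assumes M1: "sigma_finite_measure M1" and M2: "sigma_finite_measure M2"
    and M3: "sigma_finite_measure M3"
    and T: "T \<in> sets ((M1 \<Otimes>\<^sub>M M2) \<Otimes>\<^sub>M M3)"
    and null: "\<And>y a. emeasure M1 {t. ((t, y), a) \<in> T} = 0"
  shows "T \<in> null_sets ((M1 \<Otimes>\<^sub>M M2) \<Otimes>\<^sub>M M3)"
proof -
  interpret P12: pair_sigma_finite M1 M2 by (intro pair_sigma_finite.intro M1 M2)
  interpret P: pair_sigma_finite "M1 \<Otimes>\<^sub>M M2" M3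
    by (intro pair_sigma_finite.intro sigma_finite_pair_measure M1 M2 M3)
  have "emeasure ((M1 \<Otimes>\<^sub>M M2) \<Otimes>\<^sub>M M3) T = (\<integral>\<^sup>+a. emeasure (M1 \<Otimes>\<^sub>M M2) ((\<lambda>z. (z, a)) -` T) \<partial>M3)"
    by (rule P.emeasure_pair_measure_alt2[OF T])
  also have "\<dots> = (\<integral>\<^sup>+a. 0 \<partial>M3)"
  proof (rule nn_integral_cong)
    fix a
    have "emeasure (M1 \<Otimes>\<^sub>M M2) ((\<lambda>z. (z, a)) -` T)
        = (\<integral>\<^sup>+y. emeasure M1 ((\<lambda>t. (t, y)) -` ((\<lambda>z. (z, a)) -` T)) \<partial>M2)"
      by (rule P12.emeasure_pair_measure_alt2[OF sets_Pair2[OF T]])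
    also have "\<dots> = 0" using null by (simp add: vimage_def)
    finally show "emeasure (M1 \<Otimes>\<^sub>M M2) ((\<lambda>z. (z, a)) -` T) = 0" .
  qed
  finally show ?thesis using T by auto
qed

section \<open>The posterior matching scheme\<close>

text \<open>The scheme of the theorem: \<open>Fpost n y\<close> is the posterior c.d.f. of \<open>\<Theta>0\<close> given \<open>Y\<^sup>n = y\<close>,
  the input \<open>X n\<close> (the paper's \<open>X\<^sub>n\<^sub>+\<^sub>1\<close>) is the \<open>P\<^sub>X\<close>-quantile of the posterior c.d.f. value
  of the message point, and \<open>Y n\<close> is its channel output.\<close>
locale posterior_matching = prob_space M for M :: "'a measure" +
  fixes PX :: "real measure" and K :: "real \<Rightarrow> real measure"
    and \<Theta>0 :: "'a \<Rightarrow> real" and Y :: "nat \<Rightarrow> 'a \<Rightarrow> real"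
    and X :: "nat \<Rightarrow> 'a \<Rightarrow> real" and Fpost :: "nat \<Rightarrow> (nat \<Rightarrow> real) \<Rightarrow> real \<Rightarrow> real"
  assumes PX: "prob_space PX" "sets PX = sets borel"
    and K_measurable: "K \<in> borel \<rightarrow>\<^sub>M subprob_algebra borel"
    and info: "finite_mutual_info PX K"
    and theta_measurable: "\<Theta>0 \<in> borel_measurable M"
    and theta_uniform: "distr M borel \<Theta>0 = Unif"
    and Y_measurable: "\<And>i. Y i \<in> borel_measurable M"
    and post_cdf: "\<And>n y. cdf_like (Fpost n y)"
    and post_measurable: "\<And>n \<theta>. (\<lambda>y. Fpost n y \<theta>) \<in> borel_measurable (Yspace n)"
    and posterior: "\<And>n \<theta> B. B \<in> sets (Yspace n) \<Longrightarrow>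
        measure M {\<omega>\<in>space M. \<Theta>0 \<omega> \<le> \<theta> \<and> Yvec Y n \<omega> \<in> B}
        = (\<integral>\<omega>. indicator B (Yvec Y n \<omega>) * Fpost n (Yvec Y n \<omega>) \<theta> \<partial>M)"
    and encoder: "\<And>n \<omega>. X n \<omega> = quantile_fn (cdf PX) (Fpost n (Yvec Y n \<omega>) (\<Theta>0 \<omega>))"
    and channel: "\<And>n B C. B \<in> sets (borel \<Otimes>\<^sub>M Yspace n) \<Longrightarrow> C \<in> sets borel \<Longrightarrow>
        emeasure M {\<omega>\<in>space M. (\<Theta>0 \<omega>, Yvec Y n \<omega>) \<in> B \<and> Y n \<omega> \<in> C}
        = (\<integral>\<^sup>+\<omega>. indicator B (\<Theta>0 \<omega>, Yvec Y n \<omega>) * emeasure (K (X n \<omega>)) C \<partial>M)"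
begin

definition U :: "nat \<Rightarrow> 'a \<Rightarrow> real" where
  "U n \<omega> = Fpost n (Yvec Y n \<omega>) (\<Theta>0 \<omega>)"

definition out_law :: "nat \<Rightarrow> (nat \<Rightarrow> real) measure" where
  "out_law n = distr M (Yspace n) (Yvec Y n)"

definition msg_law :: "nat \<Rightarrow> (real \<times> (nat \<Rightarrow> real)) measure" where
  "msg_law n = distr M (borel \<Otimes>\<^sub>M Yspace n) (\<lambda>\<omega>. (\<Theta>0 \<omega>, Yvec Y n \<omega>))"

abbreviation quantile_PX :: "real \<Rightarrow> real" where
  "quantile_PX \<equiv> quantile_fn (cdf PX)"

lemmas [measurable] = theta_measurable Y_measurable post_measurable

lemma Fpost_mono: "mono (Fpost n y)"
  and Fpost_right_cont: "continuous (at_right \<theta>) (Fpost n y)"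
  using post_cdf[of n y] by (auto simp: cdf_like_def)

lemma Fpost_bounds: "0 \<le> Fpost n y t" "Fpost n y t \<le> 1"
  using cdf_like_bounds[OF post_cdf] by auto

lemma Fpost_joint_measurable[measurable]:
  "(\<lambda>p. Fpost n (snd p) (fst p)) \<in> borel_measurable (borel \<Otimes>\<^sub>M Yspace n)"
  by (rule measurable_right_continuous_family[OF post_measurable Fpost_right_cont])

lemma prefix_measurable[measurable]: "Yvec Y n \<in> measurable M (Yspace n)"
  by (rule Yvec_measurable[OF Y_measurable])

lemma msg_measurable[measurable]:
  "(\<lambda>\<omega>. (\<Theta>0 \<omega>, Yvec Y n \<omega>)) \<in> measurable M (borel \<Otimes>\<^sub>M Yspace n)"
  by measurable

lemma U_measurable[measurable]: "U n \<in> borel_measurable M"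
  using measurable_compose[OF msg_measurable Fpost_joint_measurable] by (simp add: U_def[abs_def])

lemma U_Y_measurable[measurable]:
  "(\<lambda>\<omega>. (U n \<omega>, Yvec Y n \<omega>)) \<in> measurable M (borel \<Otimes>\<^sub>M Yspace n)"
  by measurable

lemma PX_real_distribution: "real_distribution PX"
  using PX by (auto simp: real_distribution_def real_distribution_axioms_def)

lemma quantile_PX_measurable[measurable]: "quantile_PX \<in> borel_measurable borel"
  by (rule quantile_measurable[OF cdf_like_cdf[OF PX_real_distribution]])

lemma X_eq: "X n = (\<lambda>\<omega>. quantile_PX (U n \<omega>))"
  using encoder by (auto simp: U_def)

lemma X_measurable[measurable]: "X n \<in> borel_measurable M"
  unfolding X_eq by measurable

lemma prob_space_out_law: "prob_space (out_law n)"
  unfolding out_law_def by (rule prob_space_distr) measurable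

lemma sets_out_law[simp, measurable_cong]: "sets (out_law n) = sets (Yspace n)"
  by (simp add: out_law_def)

lemma space_out_law[simp]: "space (out_law n) = space (Yspace n)"
  by (simp add: out_law_def)

lemma sets_msg_law[simp, measurable_cong]: "sets (msg_law n) = sets (borel \<Otimes>\<^sub>M Yspace n)"
  by (simp add: msg_law_def)

lemma space_msg_law[simp]: "space (msg_law n) = space (borel \<Otimes>\<^sub>M Yspace n)"
  by (simp add: msg_law_def)

lemma pair_sigma_finite_lborel_out_law: "pair_sigma_finite lborel (out_law n)"
proof -
  interpret N: prob_space "out_law n" by (rule prob_space_out_law)
  show ?thesis by (intro pair_sigma_finite.intro sigma_finite_lborel N.sigma_finite_measure_axioms)
qed

lemma sigma_finite_lborel_out_law: "sigma_finite_measure (lborel \<Otimes>\<^sub>M out_law n)"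
proof -
  interpret N: prob_space "out_law n" by (rule prob_space_out_law)
  show ?thesis by (intro sigma_finite_pair_measure sigma_finite_lborel N.sigma_finite_measure_axioms)
qed

lemma sets_lborel_out_law: "sets (lborel \<Otimes>\<^sub>M out_law n) = sets (borel \<Otimes>\<^sub>M Yspace n)"
  by (rule sets_pair_measure_cong) auto

lemma msg_law_atMost_Times:
  assumes B: "B \<in> sets (Yspace n)"
  shows "emeasure (msg_law n) ({..\<theta>} \<times> B) = (\<integral>\<^sup>+y. ennreal (Fpost n y \<theta>) * indicator B y \<partial>out_law n)"
proof -
  have "emeasure (msg_law n) ({..\<theta>} \<times> B) = emeasure M {\<omega>\<in>space M. \<Theta>0 \<omega> \<le> \<theta> \<and> Yvec Y n \<omega> \<in> B}"
    unfolding msg_law_def using B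
    by (subst emeasure_distr) (auto intro!: arg_cong[where f="emeasure M"])
  also have "\<dots> = ennreal (\<integral>\<omega>. indicator B (Yvec Y n \<omega>) * Fpost n (Yvec Y n \<omega>) \<theta> \<partial>M)"
    using posterior[OF B] by (simp add: emeasure_eq_measure)
  also have "\<dots> = (\<integral>\<^sup>+\<omega>. ennreal (indicator B (Yvec Y n \<omega>) * Fpost n (Yvec Y n \<omega>) \<theta>) \<partial>M)"
  proof (rule nn_integral_eq_integral[symmetric])
    show "integrable M (\<lambda>\<omega>. indicator B (Yvec Y n \<omega>) * Fpost n (Yvec Y n \<omega>) \<theta>)"
    proof (rule integrable_const_bound[where B=1])
      show "AE \<omega> in M. norm (indicator B (Yvec Y n \<omega>) * Fpost n (Yvec Y n \<omega>) \<theta>) \<le> (1::real)"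
        using Fpost_bounds by (auto simp: indicator_def)
    qed (use B in measurable)
  qed (auto simp: Fpost_bounds)
  also have "\<dots> = (\<integral>\<^sup>+y. ennreal (Fpost n y \<theta>) * indicator B y \<partial>out_law n)"
    unfolding out_law_def using B
    by (subst nn_integral_distr) (auto intro!: nn_integral_cong simp: indicator_def)
  finally show ?thesis .
qed

subsection \<open>The conditional law of the message point\<close>

text \<open>When \<open>msg_law n\<close> has a density \<open>cond_density n\<close> w.r.t. Lebesgue \<open>\<otimes>\<close> \<open>P\<^sub>Y\<^sub>\<^sup>n\<close>, its sections
  define the conditional law \<open>cond_law n y\<close> of \<open>\<Theta>0\<close> given \<open>Y\<^sup>n = y\<close>; it has no atoms.\<close>
definition cond_density :: "nat \<Rightarrow> real \<times> (nat \<Rightarrow> real) \<Rightarrow> ennreal" where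
  "cond_density n = RN_deriv (lborel \<Otimes>\<^sub>M out_law n) (msg_law n)"

definition cond_law :: "nat \<Rightarrow> (nat \<Rightarrow> real) \<Rightarrow> real measure" where
  "cond_law n y = density lborel (\<lambda>t. cond_density n (t, y))"

lemma cond_density_measurable[measurable]:
  "cond_density n \<in> borel_measurable (lborel \<Otimes>\<^sub>M out_law n)"
  unfolding cond_density_def by (rule borel_measurable_RN_deriv)

lemma cond_density_section_measurable:
  "y \<in> space (Yspace n) \<Longrightarrow> (\<lambda>t. cond_density n (t, y)) \<in> borel_measurable lborel"
  using measurable_Pair1[OF cond_density_measurable[of n], of y] by simp

lemma sets_cond_law[simp, measurable_cong]: "sets (cond_law n y) = sets borel"
  by (simp add: cond_law_def)

lemma emeasure_cond_law:
  "y \<in> space (Yspace n) \<Longrightarrow> A \<in> sets borel \<Longrightarrow>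
    emeasure (cond_law n y) A = (\<integral>\<^sup>+t. cond_density n (t, y) * indicator A t \<partial>lborel)"
  unfolding cond_law_def using cond_density_section_measurable[of y n]
  by (subst emeasure_density) auto

lemma cond_law_measurable:
  assumes A: "A \<in> sets borel"
  shows "(\<lambda>y. emeasure (cond_law n y) A) \<in> borel_measurable (out_law n)"
proof -
  have "(\<lambda>(y, t). cond_density n (t, y) * indicator A t) \<in> borel_measurable (out_law n \<Otimes>\<^sub>M lborel)"
    using measurable_pair_swap[OF cond_density_measurable[of n]] A
    by (simp add: case_prod_beta')
  then have "(\<lambda>y. \<integral>\<^sup>+t. cond_density n (t, y) * indicator A t \<partial>lborel) \<in> borel_measurable (out_law n)"
    by (rule lborel.borel_measurable_nn_integral)
  then show ?thesis
    by (rule measurable_cong[THEN iffD1, rotated]) (use A emeasure_cond_law in auto)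
qed

lemma cond_law_atomless: "y \<in> space (Yspace n) \<Longrightarrow> measure (cond_law n y) {x} = 0"
proof -
  assume y: "y \<in> space (Yspace n)"
  have "emeasure (cond_law n y) {x} = (\<integral>\<^sup>+t. cond_density n (t, y) * indicator {x} t \<partial>lborel)"
    using emeasure_cond_law[OF y] by simp
  also have "\<dots> = (\<integral>\<^sup>+t. 0 \<partial>(lborel :: real measure))"
    by (rule nn_integral_cong_AE) (use AE_lborel_singleton[of x] in \<open>auto elim!: eventually_mono\<close>)
  finally show ?thesis by (simp add: measure_def)
qed

definition recover :: "nat \<Rightarrow> real \<times> (nat \<Rightarrow> real) \<Rightarrow> real" where
  "recover n p = (if fst p \<in> {0<..<1} then cdf_inverse (Fpost n (snd p)) (fst p) else 0)"

lemma recover_measurable[measurable]: "recover n \<in> borel_measurable (borel \<Otimes>\<^sub>M Yspace n)"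
proof (rule borel_measurable_iff_le[THEN iffD2], intro allI)
  fix a
  have "{p \<in> space (borel \<Otimes>\<^sub>M Yspace n). recover n p \<le> a} =
     {p \<in> space (borel \<Otimes>\<^sub>M Yspace n). (fst p \<in> {0<..<1} \<and> fst p \<le> Fpost n (snd p) a)
        \<or> (fst p \<notin> {0<..<1} \<and> 0 \<le> a)}"
    using cdf_inverse_le_iff[OF post_cdf] by (auto simp: recover_def)
  also have "\<dots> \<in> sets (borel \<Otimes>\<^sub>M Yspace n)" by measurable
  finally show "{p \<in> space (borel \<Otimes>\<^sub>M Yspace n). recover n p \<le> a} \<in> sets (borel \<Otimes>\<^sub>M Yspace n)" .
qed

text \<open>In the following block \<open>(\<Theta>0, Y\<^sup>n)\<close> is assumed to have a density w.r.t. Lebesgue \<open>\<otimes>\<close>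
  \<open>P\<^sub>Y\<^sub>\<^sup>n\<close>; this is established by induction on \<open>n\<close> afterwards, using the block's results.\<close>
context
  fixes n :: nat
  assumes msg_ac: "absolutely_continuous (lborel \<Otimes>\<^sub>M out_law n) (msg_law n)"
begin

lemma density_cond_density: "density (lborel \<Otimes>\<^sub>M out_law n) (cond_density n) = msg_law n"
  unfolding cond_density_def
  by (rule sigma_finite_measure.density_RN_deriv[OF sigma_finite_lborel_out_law msg_ac])
    (simp add: sets_lborel_out_law)

lemma msg_law_disintegration:
  assumes A: "A \<in> sets (borel \<Otimes>\<^sub>M Yspace n)"
  shows "emeasure (msg_law n) A = (\<integral>\<^sup>+y. emeasure (cond_law n y) {t. (t, y) \<in> A} \<partial>out_law n)"
proof -
  interpret PS: pair_sigma_finite lborel "out_law n" by (rule pair_sigma_finite_lborel_out_law)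
  have A': "A \<in> sets (lborel \<Otimes>\<^sub>M out_law n)" using A by (simp add: sets_lborel_out_law)
  have "emeasure (msg_law n) A = (\<integral>\<^sup>+z. cond_density n z * indicator A z \<partial>(lborel \<Otimes>\<^sub>M out_law n))"
    by (subst density_cond_density[symmetric]) (rule emeasure_density[OF cond_density_measurable A'])
  also have "\<dots> = (\<integral>\<^sup>+y. \<integral>\<^sup>+t. cond_density n (t, y) * indicator A (t, y) \<partial>lborel \<partial>out_law n)"
    by (rule PS.nn_integral_snd[symmetric]) (use A' in measurable)
  also have "\<dots> = (\<integral>\<^sup>+y. emeasure (cond_law n y) {t. (t, y) \<in> A} \<partial>out_law n)"
  proof (rule nn_integral_cong)
    fix y assume y: "y \<in> space (out_law n)"
    have "{t. (t, y) \<in> A} \<in> sets borel"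
      using sets_Pair2[OF A, of y] by (simp add: vimage_def)
    then show "(\<integral>\<^sup>+t. cond_density n (t, y) * indicator A (t, y) \<partial>lborel)
        = emeasure (cond_law n y) {t. (t, y) \<in> A}"
      using y by (simp add: emeasure_cond_law indicator_def)
  qed
  finally show ?thesis .
qed

text \<open>Comparing with the posterior hypothesis: the c.d.f. of the conditional law is the
  posterior c.d.f., first at each point for almost every output prefix \<dots>\<close>
lemma cond_law_atMost_ae: "AE y in out_law n. ennreal (Fpost n y \<theta>) = emeasure (cond_law n y) {..\<theta>}"
proof -
  interpret N: prob_space "out_law n" by (rule prob_space_out_law)
  have "density (out_law n) (\<lambda>y. ennreal (Fpost n y \<theta>))
      = density (out_law n) (\<lambda>y. emeasure (cond_law n y) {..\<theta>})"
  proof (rule measure_eqI)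
    fix B assume "B \<in> sets (density (out_law n) (\<lambda>y. ennreal (Fpost n y \<theta>)))"
    then have B: "B \<in> sets (Yspace n)" by simp
    have "emeasure (density (out_law n) (\<lambda>y. ennreal (Fpost n y \<theta>))) B
        = emeasure (msg_law n) ({..\<theta>} \<times> B)"
      using B by (subst emeasure_density) (auto simp: msg_law_atMost_Times)
    also have "\<dots> = (\<integral>\<^sup>+y. emeasure (cond_law n y) {t. (t, y) \<in> {..\<theta>} \<times> B} \<partial>out_law n)"
      using B by (intro msg_law_disintegration) auto
    also have "\<dots> = (\<integral>\<^sup>+y. emeasure (cond_law n y) {..\<theta>} * indicator B y \<partial>out_law n)"
      by (intro nn_integral_cong) (auto simp: indicator_def atMost_def)
    also have "\<dots> = emeasure (density (out_law n) (\<lambda>y. emeasure (cond_law n y) {..\<theta>})) B"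
      using B cond_law_measurable[of "{..\<theta>}" n] by (subst emeasure_density) auto
    finally show "emeasure (density (out_law n) (\<lambda>y. ennreal (Fpost n y \<theta>))) B
        = emeasure (density (out_law n) (\<lambda>y. emeasure (cond_law n y) {..\<theta>})) B" .
  qed simp
  then show ?thesis
    by (rule N.density_unique[rotated 2]) (use cond_law_measurable[of "{..\<theta>}" n] in auto)
qed

text \<open>\<dots> and then, by right-continuity, as functions for almost every output prefix.\<close>
lemma cond_law_cdf_ae:
  "AE y in out_law n. real_distribution (cond_law n y) \<and> cdf (cond_law n y) = Fpost n y"
proof -
  have "AE y in out_law n. \<forall>r::rat. ennreal (Fpost n y (of_rat r)) = emeasure (cond_law n y) {..of_rat r}"
    using cond_law_atMost_ae by (simp add: AE_all_countable)
  then show ?thesis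
  proof (rule AE_mp[OF _ AE_I2], intro impI)
    fix y assume y: "y \<in> space (out_law n)"
      and eq: "\<forall>r::rat. ennreal (Fpost n y (of_rat r)) = emeasure (cond_law n y) {..of_rat r}"
    have total: "emeasure (cond_law n y) UNIV = 1"
    proof -
      have "(\<lambda>m. emeasure (cond_law n y) {..real m}) \<longlonglongrightarrow> emeasure (cond_law n y) (\<Union>m. {..real m})"
        by (rule Lim_emeasure_incseq) (auto simp: incseq_def)
      moreover have "(\<Union>m. {..real m}) = UNIV" by (auto simp: real_arch_simple)
      moreover have "(\<lambda>m. emeasure (cond_law n y) {..real m}) \<longlonglongrightarrow> 1"
      proof -
        have "(Fpost n y \<longlongrightarrow> 1) at_top" using post_cdf[of n y] by (simp add: cdf_like_def)
        from tendsto_ennrealI[OF filterlim_compose[OF this filterlim_real_sequentially]]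
        have "(\<lambda>m. ennreal (Fpost n y (real m))) \<longlonglongrightarrow> 1" by simp
        moreover have "emeasure (cond_law n y) {..real m} = ennreal (Fpost n y (real m))" for m
          using eq[rule_format, of "of_nat m"] by simp
        ultimately show ?thesis by simp
      qed
      ultimately show ?thesis using LIMSEQ_unique by auto
    qed
    then have rd: "real_distribution (cond_law n y)"
      by (auto intro!: prob_spaceI simp: real_distribution_def real_distribution_axioms_def cond_law_def)
    interpret L: real_distribution "cond_law n y" by (rule rd)
    have "cdf (cond_law n y) t = Fpost n y t" for t
    proof (rule right_continuous_eq_on_rats[where f="cdf (cond_law n y)" and g="Fpost n y"])
      show "continuous (at_right t) (cdf (cond_law n y))" by (rule L.cdf_is_right_cont)
      show "continuous (at_right t) (Fpost n y)" by (rule Fpost_right_cont)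
      show "cdf (cond_law n y) (of_rat r) = Fpost n y (of_rat r)" for r
        using eq[rule_format, of r] Fpost_bounds
        by (simp add: cdf_def L.emeasure_eq_measure)
    qed
    then show "real_distribution (cond_law n y) \<and> cdf (cond_law n y) = Fpost n y"
      using rd by auto
  qed
qed

text \<open>By the probability integral transform, the posterior c.d.f. pushes almost every
  conditional law forward to the uniform law.\<close>
lemma cond_law_pit:
  "AE y in out_law n. \<forall>A\<in>sets borel. emeasure (cond_law n y) (Fpost n y -` A) = emeasure Unif A"
  using cond_law_cdf_ae
proof (rule AE_mp[OF _ AE_I2], intro impI ballI)
  fix y and A :: "real set" assume y: "y \<in> space (out_law n)" and A: "A \<in> sets borel"
    and law: "real_distribution (cond_law n y) \<and> cdf (cond_law n y) = Fpost n y"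
  have "distr (cond_law n y) borel (Fpost n y) = Unif"
    using probability_integral_transform[of "cond_law n y"] law cond_law_atomless[of y n] y by simp
  moreover have "emeasure (distr (cond_law n y) borel (Fpost n y)) A
      = emeasure (cond_law n y) (Fpost n y -` A)"
    using A Fpost_mono
    by (subst emeasure_distr)
      (auto intro: borel_measurable_mono simp: measurable_cong_sets[OF sets_cond_law refl] cond_law_def)
  ultimately show "emeasure (cond_law n y) (Fpost n y -` A) = emeasure Unif A" by simp
qed

text \<open>The key fact: integrating the previous lemma over the output prefix shows that \<open>U n\<close> is
  uniform and independent of \<open>Y\<^sup>n\<close>.\<close>
lemma U_Y_joint_law: "distr M (borel \<Otimes>\<^sub>M Yspace n) (\<lambda>\<omega>. (U n \<omega>, Yvec Y n \<omega>)) = Unif \<Otimes>\<^sub>M out_law n"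
proof (rule pair_measure_eqI[symmetric])
  interpret N: prob_space "out_law n" by (rule prob_space_out_law)
  interpret Un: prob_space Unif by (rule prob_space_Unif)
  show "sigma_finite_measure Unif" "sigma_finite_measure (out_law n)"
    by (rule Un.sigma_finite_measure_axioms N.sigma_finite_measure_axioms)+
  show "sets (Unif \<Otimes>\<^sub>M out_law n) = sets (distr M (borel \<Otimes>\<^sub>M Yspace n) (\<lambda>\<omega>. (U n \<omega>, Yvec Y n \<omega>)))"
    by (simp add: sets_pair_measure_cong[OF _ sets_out_law])
  fix A B assume "A \<in> sets Unif" and "B \<in> sets (out_law n)"
  then have A: "A \<in> sets borel" and B: "B \<in> sets (Yspace n)" by auto
  let ?g = "\<lambda>z::real \<times> (nat \<Rightarrow> real). (Fpost n (snd z) (fst z), snd z)"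
  have g: "?g \<in> measurable (borel \<Otimes>\<^sub>M Yspace n) (borel \<Otimes>\<^sub>M Yspace n)" by measurable
  have "distr M (borel \<Otimes>\<^sub>M Yspace n) (\<lambda>\<omega>. (U n \<omega>, Yvec Y n \<omega>)) = distr (msg_law n) (borel \<Otimes>\<^sub>M Yspace n) ?g"
    unfolding msg_law_def by (subst distr_distr) (auto simp: U_def comp_def intro: g)
  then have "emeasure (distr M (borel \<Otimes>\<^sub>M Yspace n) (\<lambda>\<omega>. (U n \<omega>, Yvec Y n \<omega>))) (A \<times> B)
      = emeasure (msg_law n) (?g -` (A \<times> B) \<inter> space (borel \<Otimes>\<^sub>M Yspace n))"
    using A B g by (simp add: emeasure_distr measurable_cong_sets[OF sets_msg_law refl])
  also have "\<dots> = (\<integral>\<^sup>+y. emeasure (cond_law n y) {t. (t, y) \<in> ?g -` (A \<times> B) \<inter> space (borel \<Otimes>\<^sub>M Yspace n)} \<partial>out_law n)"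
    using A B g by (intro msg_law_disintegration) (auto intro!: measurable_sets)
  also have "\<dots> = (\<integral>\<^sup>+y. emeasure Unif A * indicator B y \<partial>out_law n)"
  proof (rule nn_integral_cong_AE)
    show "AE y in out_law n. emeasure (cond_law n y) {t. (t, y) \<in> ?g -` (A \<times> B) \<inter> space (borel \<Otimes>\<^sub>M Yspace n)}
        = emeasure Unif A * indicator B y"
      using cond_law_pit
    proof (rule AE_mp[OF _ AE_I2], intro impI)
      fix y assume y: "y \<in> space (out_law n)"
        and pit: "\<forall>A\<in>sets borel. emeasure (cond_law n y) (Fpost n y -` A) = emeasure Unif A"
      have "{t. (t, y) \<in> ?g -` (A \<times> B) \<inter> space (borel \<Otimes>\<^sub>M Yspace n)}
          = (if y \<in> B then Fpost n y -` A else {})"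
        using y by (auto simp: space_pair_measure)
      then show "emeasure (cond_law n y) {t. (t, y) \<in> ?g -` (A \<times> B) \<inter> space (borel \<Otimes>\<^sub>M Yspace n)}
          = emeasure Unif A * indicator B y"
        using pit A by simp
    qed
  qed
  also have "\<dots> = emeasure Unif A * emeasure (out_law n) B"
    using B by (simp add: nn_integral_cmult_indicator)
  finally show "emeasure Unif A * emeasure (out_law n) B =
      emeasure (distr M (borel \<Otimes>\<^sub>M Yspace n) (\<lambda>\<omega>. (U n \<omega>, Yvec Y n \<omega>))) (A \<times> B)" by simp
qed

lemma U_uniform: "distr M borel (U n) = Unif"
proof (rule measure_eqI)
  interpret N: prob_space "out_law n" by (rule prob_space_out_law)
  fix A assume "A \<in> sets (distr M borel (U n))"
  then have A: "A \<in> sets borel" by simp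
  have "emeasure (distr M borel (U n)) A
      = emeasure M ((\<lambda>\<omega>. (U n \<omega>, Yvec Y n \<omega>)) -` (A \<times> space (Yspace n)) \<inter> space M)"
    using A measurable_space[OF prefix_measurable] by (subst emeasure_distr) (auto intro!: arg_cong[where f="emeasure M"])
  also have "\<dots> = emeasure (distr M (borel \<Otimes>\<^sub>M Yspace n) (\<lambda>\<omega>. (U n \<omega>, Yvec Y n \<omega>))) (A \<times> space (Yspace n))"
    using A by (subst emeasure_distr) auto
  also have "\<dots> = emeasure Unif A"
    unfolding U_Y_joint_law using A N.emeasure_space_1 by (subst N.emeasure_pair_measure_Times) auto
  finally show "emeasure (distr M borel (U n)) A = emeasure Unif A" .
qed simp

text \<open>Quantile transform: the input \<open>X n = F\<^sub>X\<^sup>-\<^sup>1(U n)\<close> has law \<open>P\<^sub>X\<close> \<dots>\<close>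
lemma X_law: "distr M borel (X n) = PX"
proof -
  have "distr M borel (X n) = distr (distr M borel (U n)) borel quantile_PX"
    unfolding X_eq by (subst distr_distr) (auto simp: comp_def)
  also have "\<dots> = PX" unfolding U_uniform by (rule quantile_transform[OF PX_real_distribution])
  finally show ?thesis .
qed

text \<open>\<dots> and, as a function of \<open>U n\<close>, it is independent of \<open>Y\<^sup>n\<close>.\<close>
lemma X_Y_joint_law:
  "distr M (borel \<Otimes>\<^sub>M Yspace n) (\<lambda>\<omega>. (X n \<omega>, Yvec Y n \<omega>)) = distr M borel (X n) \<Otimes>\<^sub>M out_law n"
proof -
  interpret N: prob_space "out_law n" by (rule prob_space_out_law)
  have g: "(\<lambda>(u, y). (quantile_PX u, y)) \<in> measurable (borel \<Otimes>\<^sub>M Yspace n) (borel \<Otimes>\<^sub>M Yspace n)"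
    by measurable
  have "distr M (borel \<Otimes>\<^sub>M Yspace n) (\<lambda>\<omega>. (X n \<omega>, Yvec Y n \<omega>))
      = distr (distr M (borel \<Otimes>\<^sub>M Yspace n) (\<lambda>\<omega>. (U n \<omega>, Yvec Y n \<omega>))) (borel \<Otimes>\<^sub>M Yspace n)
          (\<lambda>(u, y). (quantile_PX u, y))"
    unfolding X_eq by (subst distr_distr[OF g]) (auto simp: comp_def)
  also have "\<dots> = distr (Unif \<Otimes>\<^sub>M out_law n) (borel \<Otimes>\<^sub>M out_law n) (\<lambda>(u, y). (quantile_PX u, (\<lambda>x. x) y))"
    unfolding U_Y_joint_law by (rule distr_cong) (auto simp: sets_pair_measure_cong[OF refl sets_out_law])
  also have "\<dots> = distr Unif borel quantile_PX \<Otimes>\<^sub>M distr (out_law n) (out_law n) (\<lambda>x. x)"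
    by (rule pair_measure_distr[symmetric])
      (auto simp: distr_id N.sigma_finite_measure_axioms measurable_cong_sets[OF sets_Unif refl])
  also have "\<dots> = distr M borel (X n) \<Otimes>\<^sub>M out_law n"
    unfolding X_law by (simp add: distr_id quantile_transform[OF PX_real_distribution])
  finally show ?thesis .
qed

text \<open>Recovery: almost surely no rational \<open>r < \<Theta>0\<close> has \<open>U n \<le> Fpost n Y\<^sup>n r\<close>, because the
  event \<open>{U n \<le> Fpost n Y\<^sup>n r}\<close> has the same probability as its subset \<open>{\<Theta>0 \<le> r}\<close>.\<close>
lemma recovery_rat:
  "AE \<omega> in M. \<not> (of_rat r < \<Theta>0 \<omega> \<and> U n \<omega> \<le> Fpost n (Yvec Y n \<omega>) (of_rat r))"
proof -
  interpret N: prob_space "out_law n" by (rule prob_space_out_law)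
  interpret Un: prob_space Unif by (rule prob_space_Unif)
  interpret PS: pair_sigma_finite Unif "out_law n"
    by (intro pair_sigma_finite.intro Un.sigma_finite_measure_axioms N.sigma_finite_measure_axioms)
  let ?r = "of_rat r :: real"
  define E1 where "E1 = {\<omega>\<in>space M. U n \<omega> \<le> Fpost n (Yvec Y n \<omega>) ?r}"
  define E0 where "E0 = {\<omega>\<in>space M. \<Theta>0 \<omega> \<le> ?r \<and> Yvec Y n \<omega> \<in> space (Yspace n)}"
  have E1: "E1 \<in> sets M" unfolding E1_def by measurable
  have E0: "E0 \<in> sets M" unfolding E0_def by measurable
  have sub: "E0 \<subseteq> E1" unfolding E0_def E1_def U_def using Fpost_mono by (auto simp: mono_def)
  let ?G = "{p::real \<times> (nat \<Rightarrow> real). fst p \<le> Fpost n (snd p) ?r} \<inter> space (borel \<Otimes>\<^sub>M Yspace n)"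
  have G: "?G \<in> sets (borel \<Otimes>\<^sub>M Yspace n)" by measurable
  have "emeasure M E1 = emeasure (distr M (borel \<Otimes>\<^sub>M Yspace n) (\<lambda>\<omega>. (U n \<omega>, Yvec Y n \<omega>))) ?G"
    using G measurable_space[OF U_Y_measurable]
    by (subst emeasure_distr) (auto simp: E1_def intro!: arg_cong[where f="emeasure M"])
  also have "\<dots> = (\<integral>\<^sup>+y. emeasure Unif ((\<lambda>x. (x, y)) -` ?G) \<partial>out_law n)"
    unfolding U_Y_joint_law using G
    by (intro PS.emeasure_pair_measure_alt2) (simp add: sets_pair_measure_cong[OF _ sets_out_law])
  also have "\<dots> = (\<integral>\<^sup>+y. ennreal (Fpost n y ?r) * indicator (space (Yspace n)) y \<partial>out_law n)"
  proof (rule nn_integral_cong)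
    fix y assume y: "y \<in> space (out_law n)"
    then have "(\<lambda>x. (x, y)) -` ?G = {..Fpost n y ?r}" by (auto simp: space_pair_measure)
    then show "emeasure Unif ((\<lambda>x. (x, y)) -` ?G) = ennreal (Fpost n y ?r) * indicator (space (Yspace n)) y"
      using y emeasure_Unif_atMost Fpost_bounds by simp
  qed
  also have "\<dots> = emeasure (msg_law n) ({..?r} \<times> space (Yspace n))"
    by (rule msg_law_atMost_Times[symmetric]) simp
  also have "\<dots> = emeasure M E0"
    unfolding msg_law_def E0_def by (subst emeasure_distr) (auto intro!: arg_cong[where f="emeasure M"])
  finally have "emeasure M E1 = emeasure M E0" .
  then have "emeasure M (E1 - E0) = 0"
    using emeasure_Diff[OF _ E1 E0 sub] by (simp add: emeasure_eq_measure)
  moreover have "{\<omega>\<in>space M. \<not> \<not> (?r < \<Theta>0 \<omega> \<and> U n \<omega> \<le> Fpost n (Yvec Y n \<omega>) ?r)} = E1 - E0"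
    using measurable_space[OF prefix_measurable] by (auto simp: E1_def E0_def)
  ultimately show ?thesis
    using E1 E0 by (subst AE_iff_measurable[where N="E1 - E0"]) auto
qed

lemma recovery: "AE \<omega> in M. \<Theta>0 \<omega> = recover n (U n \<omega>, Yvec Y n \<omega>)"
proof -
  have "AE u in distr M borel (U n). 0 < u \<and> u < 1" unfolding U_uniform by (rule AE_Unif_Ioo)
  then have "AE \<omega> in M. 0 < U n \<omega> \<and> U n \<omega> < 1" by (subst (asm) AE_distr_iff) auto
  moreover have "AE \<omega> in M. \<forall>r::rat. \<not> (of_rat r < \<Theta>0 \<omega> \<and> U n \<omega> \<le> Fpost n (Yvec Y n \<omega>) (of_rat r))"
    unfolding AE_all_countable using recovery_rat by blast
  ultimately show ?thesis
  proof eventually_elim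
    case (elim \<omega>)
    let ?u = "U n \<omega>" and ?y = "Yvec Y n \<omega>"
    have le_iff: "recover n (?u, ?y) \<le> x \<longleftrightarrow> ?u \<le> Fpost n ?y x" for x
      using cdf_inverse_le_iff[OF post_cdf, of ?u] elim by (simp add: recover_def)
    have "recover n (?u, ?y) \<le> \<Theta>0 \<omega>" unfolding le_iff by (simp add: U_def)
    moreover have "\<not> recover n (?u, ?y) < \<Theta>0 \<omega>"
    proof
      assume "recover n (?u, ?y) < \<Theta>0 \<omega>"
      then obtain r where r: "r \<in> \<rat>" "recover n (?u, ?y) < r" "r < \<Theta>0 \<omega>"
        using Rats_dense_in_real by blast
      then obtain r' where r': "r = of_rat r'" by (auto elim: Rats_cases)
      have "?u \<le> Fpost n ?y r" by (metis le_iff less_imp_le r(2))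
      then show False using elim(2)[rule_format, of r'] r(3) r' by simp
    qed
    ultimately show ?case by simp
  qed
qed

end

subsection \<open>Absolute continuity of the joint law of message point and outputs\<close>

abbreviation PY :: "real measure" where
  "PY \<equiv> PX \<bind> K"

lemma sets_PY[simp, measurable_cong]: "sets PY = sets borel"
  by (rule output_law(2)[OF PX K_measurable])

lemma subprob_space_PY: "subprob_space PY"
  by (rule output_law(1)[OF PX K_measurable])

lemma channel_ac_along_input:
  assumes X_law: "distr M borel (X n) = PX"
  shows "AE \<omega> in M. absolutely_continuous PY (K (X n \<omega>))"
proof -
  have "absolutely_continuous (PX \<Otimes>\<^sub>M PY) (joint_law PX K)"
    using info by (simp add: finite_mutual_info_def Let_def)
  then have "AE x in distr M borel (X n). absolutely_continuous PY (K x)"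
    unfolding X_law by (rule channel_ac_output_law[OF PX K_measurable])
  then show ?thesis by (rule AE_distrD[rotated]) simp
qed

text \<open>One step of the scheme as a kernel: from \<open>(\<Theta>0, Y\<^sup>n)\<close> the encoder computes the input and
  the channel appends the output \<open>Y n\<close>.\<close>
definition encoder_map :: "nat \<Rightarrow> real \<times> (nat \<Rightarrow> real) \<Rightarrow> real" where
  "encoder_map n z = quantile_PX (Fpost n (snd z) (fst z))"

definition step_kernel :: "nat \<Rightarrow> real \<times> (nat \<Rightarrow> real) \<Rightarrow> ((real \<times> (nat \<Rightarrow> real)) \<times> real) measure" where
  "step_kernel n z = distr (K (encoder_map n z)) ((borel \<Otimes>\<^sub>M Yspace n) \<Otimes>\<^sub>M borel) (Pair z)"

definition step_law :: "nat \<Rightarrow> ((real \<times> (nat \<Rightarrow> real)) \<times> real) measure" where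
  "step_law n = distr M ((borel \<Otimes>\<^sub>M Yspace n) \<Otimes>\<^sub>M borel) (\<lambda>\<omega>. ((\<Theta>0 \<omega>, Yvec Y n \<omega>), Y n \<omega>))"

lemma sets_step_law[simp, measurable_cong]:
  "sets (step_law n) = sets ((borel \<Otimes>\<^sub>M Yspace n) \<Otimes>\<^sub>M borel)"
  by (simp add: step_law_def)

lemma encoder_map_measurable[measurable]: "encoder_map n \<in> borel_measurable (borel \<Otimes>\<^sub>M Yspace n)"
  unfolding encoder_map_def[abs_def] by measurable

lemma encoder_map_msg: "encoder_map n (\<Theta>0 \<omega>, Yvec Y n \<omega>) = X n \<omega>"
  by (simp add: encoder_map_def X_eq U_def)

lemma step_kernel_measurable:
  "step_kernel n \<in> measurable (msg_law n) (subprob_algebra ((borel \<Otimes>\<^sub>M Yspace n) \<Otimes>\<^sub>M borel))"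
  unfolding step_kernel_def[abs_def]
proof (rule measurable_distr2[where f="\<lambda>z a. (z, a)"])
  show "(\<lambda>(z, a). (z, a)) \<in> measurable (msg_law n \<Otimes>\<^sub>M borel) ((borel \<Otimes>\<^sub>M Yspace n) \<Otimes>\<^sub>M borel)"
    by (simp add: measurable_cong_sets[OF sets_pair_measure_cong[OF sets_msg_law refl] refl]
        case_prod_beta')
  have "(\<lambda>z. K (encoder_map n z)) \<in> measurable (borel \<Otimes>\<^sub>M Yspace n) (subprob_algebra borel)"
    by (rule measurable_compose[OF encoder_map_measurable K_measurable])
  then show "(\<lambda>z. K (encoder_map n z)) \<in> measurable (msg_law n) (subprob_algebra borel)"
    by (simp add: measurable_cong_sets[OF sets_msg_law refl])
qed

lemma space_msg_law_nonempty: "space (msg_law n) \<noteq> {}"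
  using measurable_space[OF msg_measurable] not_empty by auto

lemma emeasure_msg_law_bind:
  fixes T :: "((real \<times> (nat \<Rightarrow> real)) \<times> real) set"
  assumes T: "T \<in> sets ((borel \<Otimes>\<^sub>M Yspace n) \<Otimes>\<^sub>M borel)"
  shows "emeasure (msg_law n \<bind> step_kernel n) T
    = (\<integral>\<^sup>+\<omega>. emeasure (K (X n \<omega>)) (Pair (\<Theta>0 \<omega>, Yvec Y n \<omega>) -` T) \<partial>M)"
proof -
  have "emeasure (msg_law n \<bind> step_kernel n) T = (\<integral>\<^sup>+z. emeasure (step_kernel n z) T \<partial>msg_law n)"
    by (rule emeasure_bind[OF space_msg_law_nonempty step_kernel_measurable T])
  also have "\<dots> = (\<integral>\<^sup>+\<omega>. emeasure (step_kernel n (\<Theta>0 \<omega>, Yvec Y n \<omega>)) T \<partial>M)"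
    unfolding msg_law_def
    by (rule nn_integral_distr[OF msg_measurable])
      (rule measurable_compose[OF step_kernel_measurable[unfolded msg_law_def]
          measurable_emeasure_subprob_algebra[OF T]])
  also have "\<dots> = (\<integral>\<^sup>+\<omega>. emeasure (K (X n \<omega>)) (Pair (\<Theta>0 \<omega>, Yvec Y n \<omega>) -` T) \<partial>M)"
  proof (rule nn_integral_cong)
    fix \<omega> assume \<omega>: "\<omega> \<in> space M"
    let ?z = "(\<Theta>0 \<omega>, Yvec Y n \<omega>)"
    have Kz: "sets (K (encoder_map n ?z)) = sets borel" by (rule subprob_kernel_at(2)[OF K_measurable])
    have "Pair ?z \<in> measurable (K (encoder_map n ?z)) ((borel \<Otimes>\<^sub>M Yspace n) \<Otimes>\<^sub>M borel)"
      using measurable_Pair1'[OF measurable_space[OF msg_measurable[of n] \<omega>], of borel]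
      by (simp add: measurable_cong_sets[OF Kz refl])
    then show "emeasure (step_kernel n ?z) T = emeasure (K (X n \<omega>)) (Pair ?z -` T)"
      unfolding step_kernel_def using T sets_eq_imp_space_eq[OF Kz]
      by (subst emeasure_distr) (auto simp: encoder_map_msg)
  qed
  finally show ?thesis .
qed

text \<open>Both sides agree on rectangles.\<close>
lemma step_law_bind: "step_law n = msg_law n \<bind> step_kernel n"
proof -
  let ?S = "(borel \<Otimes>\<^sub>M Yspace n) \<Otimes>\<^sub>M borel"
  let ?E = "{a \<times> b | a b. a \<in> sets ((borel::real measure) \<Otimes>\<^sub>M Yspace n) \<and> b \<in> sets (borel::real measure)}"
  let ?\<Omega> = "space ((borel::real measure) \<Otimes>\<^sub>M Yspace n) \<times> space (borel::real measure)"
  have step_meas: "(\<lambda>\<omega>. ((\<Theta>0 \<omega>, Yvec Y n \<omega>), Y n \<omega>)) \<in> measurable M ?S" by measurable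
  show ?thesis
  proof (rule measure_eqI_generator_eq[where E="?E" and \<Omega>="?\<Omega>" and A="\<lambda>_. ?\<Omega>"])
    show "Int_stable ?E" by (rule Int_stable_pair_measure_generator)
    show "?E \<subseteq> Pow ?\<Omega>" by (rule pair_measure_closed)
    show "sets (step_law n) = sigma_sets ?\<Omega> ?E" by (simp add: step_law_def sets_pair_measure)
    show "sets (msg_law n \<bind> step_kernel n) = sigma_sets ?\<Omega> ?E"
      unfolding sets_bind_measurable[OF step_kernel_measurable space_msg_law_nonempty]
      by (simp add: sets_pair_measure)
    show "range (\<lambda>_. ?\<Omega>) \<subseteq> ?E"
      using sets.top[of "(borel::real measure) \<Otimes>\<^sub>M Yspace n"] sets.top[of "borel::real measure"] by blast
    show "(\<Union>i::nat. ?\<Omega>) = ?\<Omega>" by simp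
    show "emeasure (step_law n) ?\<Omega> \<noteq> \<infinity>" for i :: nat
    proof -
      interpret D: prob_space "step_law n" unfolding step_law_def by (rule prob_space_distr[OF step_meas])
      show ?thesis using D.emeasure_finite by auto
    qed
    fix R assume "R \<in> ?E"
    then obtain B C where R: "R = B \<times> C"
      and B: "B \<in> sets (borel \<Otimes>\<^sub>M Yspace n)" and C: "C \<in> sets (borel::real measure)" by auto
    have "emeasure (step_law n) R = emeasure M {\<omega>\<in>space M. (\<Theta>0 \<omega>, Yvec Y n \<omega>) \<in> B \<and> Y n \<omega> \<in> C}"
      unfolding step_law_def using B C step_meas
      by (subst emeasure_distr) (auto simp: R intro!: arg_cong[where f="emeasure M"])
    also have "\<dots> = (\<integral>\<^sup>+\<omega>. emeasure (K (X n \<omega>)) (Pair (\<Theta>0 \<omega>, Yvec Y n \<omega>) -` R) \<partial>M)"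
      unfolding channel[OF B C] by (intro nn_integral_cong) (auto simp: R)
    also have "\<dots> = emeasure (msg_law n \<bind> step_kernel n) R"
      using B C by (intro emeasure_msg_law_bind[symmetric]) (simp add: R)
    finally show "emeasure (step_law n) R = emeasure (msg_law n \<bind> step_kernel n) R" .
  qed
qed

lemma step_law_ac:
  assumes msg_ac: "absolutely_continuous (lborel \<Otimes>\<^sub>M out_law n) (msg_law n)"
    and X_law: "distr M borel (X n) = PX"
  shows "absolutely_continuous ((lborel \<Otimes>\<^sub>M out_law n) \<Otimes>\<^sub>M PY) (step_law n)"
  unfolding absolutely_continuous_def
proof
  fix T :: "((real \<times> (nat \<Rightarrow> real)) \<times> real) set"
  assume T_null: "T \<in> null_sets ((lborel \<Otimes>\<^sub>M out_law n) \<Otimes>\<^sub>M PY)"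
  have T': "T \<in> sets ((borel \<Otimes>\<^sub>M Yspace n) \<Otimes>\<^sub>M borel)"
    using null_setsD2[OF T_null] by (simp add: sets_pair_measure_cong[OF sets_lborel_out_law sets_PY])
  interpret PY: subprob_space PY by (rule subprob_space_PY)
  interpret PS: pair_sigma_finite "lborel \<Otimes>\<^sub>M out_law n" PY
    by (intro pair_sigma_finite.intro sigma_finite_lborel_out_law PY.sigma_finite_measure_axioms)
  define \<eta> where "\<eta> z = emeasure PY (Pair z -` T)" for z
  have "AE z in lborel \<Otimes>\<^sub>M out_law n. \<eta> z = 0"
    unfolding \<eta>_def by (rule PS.AE_null_sections(1)[OF T_null])
  then have "AE z in msg_law n. \<eta> z = 0"
    by (rule absolutely_continuous_AE[OF _ msg_ac, rotated]) (simp add: sets_lborel_out_law)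
  then have "AE \<omega> in M. \<eta> (\<Theta>0 \<omega>, Yvec Y n \<omega>) = 0"
    unfolding msg_law_def by (rule AE_distrD[OF msg_measurable])
  then have "AE \<omega> in M. emeasure (K (X n \<omega>)) (Pair (\<Theta>0 \<omega>, Yvec Y n \<omega>) -` T) = 0"
    using channel_ac_along_input[OF X_law]
  proof eventually_elim
    case (elim \<omega>)
    have "Pair (\<Theta>0 \<omega>, Yvec Y n \<omega>) -` T \<in> null_sets PY"
      using sets_Pair1[OF T'] elim(1) by (intro null_setsI) (auto simp: \<eta>_def)
    with elim(2) show ?case by (auto simp: absolutely_continuous_def)
  qed
  then have "(\<integral>\<^sup>+\<omega>. emeasure (K (X n \<omega>)) (Pair (\<Theta>0 \<omega>, Yvec Y n \<omega>) -` T) \<partial>M) = (\<integral>\<^sup>+\<omega>. 0 \<partial>M)"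
    by (rule nn_integral_cong_AE)
  then have "emeasure (step_law n) T = 0"
    by (simp add: step_law_bind emeasure_msg_law_bind[OF T'])
  then show "T \<in> null_sets (step_law n)" by (rule null_setsI) (use T' in simp)
qed

definition extend_prefix :: "nat \<Rightarrow> (real \<times> (nat \<Rightarrow> real)) \<times> real \<Rightarrow> real \<times> (nat \<Rightarrow> real)" where
  "extend_prefix n p = (fst (fst p), (snd (fst p))(n := snd p))"

lemma extend_prefix_measurable[measurable]:
  "extend_prefix n \<in> measurable ((borel \<Otimes>\<^sub>M Yspace n) \<Otimes>\<^sub>M borel) (borel \<Otimes>\<^sub>M Yspace (Suc n))"
proof -
  have "(\<lambda>p. (snd (fst p), snd p)) \<in> measurable ((borel \<Otimes>\<^sub>M Yspace n) \<Otimes>\<^sub>M borel) (Yspace n \<Otimes>\<^sub>M borel)"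
    by measurable
  from measurable_compose[OF this append_output_measurable]
  have [measurable]: "(\<lambda>p. (snd (fst p))(n := snd p))
      \<in> measurable ((borel \<Otimes>\<^sub>M Yspace n) \<Otimes>\<^sub>M borel) (Yspace (Suc n))" by simp
  show ?thesis unfolding extend_prefix_def[abs_def] by measurable
qed

lemma msg_law_Suc: "msg_law (Suc n) = distr (step_law n) (borel \<Otimes>\<^sub>M Yspace (Suc n)) (extend_prefix n)"
  unfolding msg_law_def step_law_def
  by (subst distr_distr) (auto simp: comp_def extend_prefix_def Yvec_Suc)

text \<open>Induction base: \<open>(\<Theta>0, Y\<^sup>0)\<close> is essentially \<open>\<Theta>0\<close>, which is uniform, hence has a
  Lebesgue density.\<close>
lemma msg_law_ac_0: "absolutely_continuous (lborel \<Otimes>\<^sub>M out_law 0) (msg_law 0)"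
  unfolding absolutely_continuous_def
proof
  fix S :: "(real \<times> (nat \<Rightarrow> real)) set"
  assume S_null: "S \<in> null_sets (lborel \<Otimes>\<^sub>M out_law 0)"
  then have S': "S \<in> sets (borel \<Otimes>\<^sub>M Yspace 0)" using sets_lborel_out_law by auto
  interpret PS: pair_sigma_finite lborel "out_law 0" by (rule pair_sigma_finite_lborel_out_law)
  interpret N: prob_space "out_law 0" by (rule prob_space_out_law)
  text \<open>There is only one output prefix of length 0, the constant \<open>c\<close>.\<close>
  let ?c = "\<lambda>_::nat. undefined :: real"
  let ?h = "\<lambda>w. emeasure lborel ((\<lambda>t. (t, w)) -` S)"
  have "AE w in out_law 0. ?h w = 0" by (rule PS.AE_null_sections(2)[OF S_null])
  moreover have "AE w in out_law 0. w = ?c" by (rule AE_I2) (simp add: space_Yspace_0)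
  ultimately have "AE w in out_law 0. ?h ?c = 0" by eventually_elim simp
  then have hc: "?h ?c = 0" by simp
  have Yc: "Yvec Y 0 \<omega> = ?c" for \<omega> by (auto simp: Yvec_def)
  have "emeasure (msg_law 0) S = emeasure M (\<Theta>0 -` ((\<lambda>t. (t, ?c)) -` S) \<inter> space M)"
    unfolding msg_law_def
    by (subst emeasure_distr[OF msg_measurable S']) (auto simp: Yc intro!: arg_cong[where f="emeasure M"])
  also have "\<dots> = emeasure (distr M borel \<Theta>0) ((\<lambda>t. (t, ?c)) -` S)"
    using sets_Pair2[OF S'] by (subst emeasure_distr) auto
  also have "\<dots> = emeasure lborel ({0<..<1} \<inter> (\<lambda>t. (t, ?c)) -` S)"
    unfolding theta_uniform using sets_Pair2[OF S'] by (simp add: divide_ennreal_def)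
  also have "\<dots> \<le> ?h ?c"
    using sets_Pair2[OF S'] by (intro emeasure_mono) auto
  finally have "emeasure (msg_law 0) S = 0" using hc by simp
  then show "S \<in> null_sets (msg_law 0)" using S' by auto
qed

text \<open>Keeping only the prefixes over which the Lebesgue sections of \<open>S\<close> are null, the preimage of
  \<open>S\<close> under \<open>extend_prefix\<close> has null first sections, hence is null for Lebesgue \<open>\<otimes>\<close> \<open>P\<^sub>Y\<^sub>\<^sup>n\<close>
  \<open>\<otimes>\<close> \<open>P\<^sub>Y\<close>.\<close>
lemma extend_prefix_null_part:
  assumes S: "S \<in> sets (borel \<Otimes>\<^sub>M Yspace (Suc n))"
  shows "{p \<in> space ((borel \<Otimes>\<^sub>M Yspace n) \<Otimes>\<^sub>M borel). extend_prefix n p \<in> S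
      \<and> emeasure lborel ((\<lambda>t. (t, snd (extend_prefix n p))) -` S) = 0}
    \<in> null_sets ((lborel \<Otimes>\<^sub>M out_law n) \<Otimes>\<^sub>M PY)" (is "?T \<in> _")
proof (rule null_sets_pair3_first_sections)
  interpret N: prob_space "out_law n" by (rule prob_space_out_law)
  interpret PY: subprob_space PY by (rule subprob_space_PY)
  interpret PS: pair_sigma_finite lborel "out_law (Suc n)" by (rule pair_sigma_finite_lborel_out_law)
  show "sigma_finite_measure lborel" "sigma_finite_measure (out_law n)" "sigma_finite_measure PY"
    by (rule sigma_finite_lborel N.sigma_finite_measure_axioms PY.sigma_finite_measure_axioms)+
  have "(\<lambda>w. emeasure lborel ((\<lambda>t. (t, w)) -` S)) \<in> borel_measurable (out_law (Suc n))"
    using S by (intro PS.measurable_emeasure_Pair2) (simp add: sets_lborel_out_law)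
  then have [measurable]: "(\<lambda>w. emeasure lborel ((\<lambda>t. (t, w)) -` S)) \<in> borel_measurable (Yspace (Suc n))"
    by simp
  have "?T \<in> sets ((borel \<Otimes>\<^sub>M Yspace n) \<Otimes>\<^sub>M borel)" using S by measurable
  then show "?T \<in> sets ((lborel \<Otimes>\<^sub>M out_law n) \<Otimes>\<^sub>M PY)"
    by (simp add: sets_pair_measure_cong[OF sets_lborel_out_law sets_PY])
  fix y a
  let ?Ta = "{t. ((t, y), a) \<in> ?T}"
  show "emeasure lborel ?Ta = 0"
  proof (cases "?Ta = {}")
    case False
    then have "emeasure lborel ((\<lambda>t. (t, y(n := a))) -` S) = 0"
      by (auto simp: extend_prefix_def)
    moreover have "?Ta \<subseteq> (\<lambda>t. (t, y(n := a))) -` S" by (auto simp: extend_prefix_def)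
    then have "emeasure lborel ?Ta \<le> emeasure lborel ((\<lambda>t. (t, y(n := a))) -` S)"
      using S by (intro emeasure_mono sets_Pair2) auto
    ultimately show ?thesis by simp
  qed (simp only: emeasure_empty)
qed

text \<open>A set \<open>S\<close> null for Lebesgue \<open>\<otimes>\<close> \<open>P\<^sub>Y\<^sub>\<^sup>n\<^sub>+\<^sub>1\<close> has null Lebesgue sections
  over almost every prefix of length \<open>n+1\<close>, so up to a \<open>step_law n\<close>-null set its preimage under
  \<open>extend_prefix\<close> is the set of the previous lemma, which is null for \<open>step_law n\<close>.\<close>
lemma msg_law_ac_Suc:
  assumes msg_ac: "absolutely_continuous (lborel \<Otimes>\<^sub>M out_law n) (msg_law n)"
    and X_law: "distr M borel (X n) = PX"
  shows "absolutely_continuous (lborel \<Otimes>\<^sub>M out_law (Suc n)) (msg_law (Suc n))"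
  unfolding absolutely_continuous_def
proof
  fix S :: "(real \<times> (nat \<Rightarrow> real)) set"
  assume S_null: "S \<in> null_sets (lborel \<Otimes>\<^sub>M out_law (Suc n))"
  then have S: "S \<in> sets (lborel \<Otimes>\<^sub>M out_law (Suc n))" by auto
  then have S': "S \<in> sets (borel \<Otimes>\<^sub>M Yspace (Suc n))" using sets_lborel_out_law by simp
  interpret PS: pair_sigma_finite lborel "out_law (Suc n)" by (rule pair_sigma_finite_lborel_out_law)
  define h where "h w = emeasure lborel ((\<lambda>t. (t, w)) -` S)" for w
  have "h \<in> borel_measurable (out_law (Suc n))"
    unfolding h_def[abs_def] by (rule PS.measurable_emeasure_Pair2[OF S])
  then have [measurable]: "h \<in> borel_measurable (Yspace (Suc n))" by simp
  have "AE w in out_law (Suc n). h w = 0"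
    unfolding h_def by (rule PS.AE_null_sections(2)[OF S_null])
  then have "AE \<omega> in M. h (Yvec Y (Suc n) \<omega>) = 0"
    unfolding out_law_def by (rule AE_distrD[OF prefix_measurable])
  moreover have "{p \<in> space ((borel \<Otimes>\<^sub>M Yspace n) \<Otimes>\<^sub>M borel). h (snd (extend_prefix n p)) = 0}
      \<in> sets ((borel \<Otimes>\<^sub>M Yspace n) \<Otimes>\<^sub>M borel)" by measurable
  ultimately have h_ae: "AE p in step_law n. h (snd (extend_prefix n p)) = 0"
    unfolding step_law_def by (subst AE_distr_iff) (simp_all add: extend_prefix_def Yvec_Suc)
  define T where "T = {p \<in> space ((borel \<Otimes>\<^sub>M Yspace n) \<Otimes>\<^sub>M borel).
      extend_prefix n p \<in> S \<and> h (snd (extend_prefix n p)) = 0}"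
  have T: "T \<in> sets ((borel \<Otimes>\<^sub>M Yspace n) \<Otimes>\<^sub>M borel)" unfolding T_def using S' by measurable
  have "T \<in> null_sets ((lborel \<Otimes>\<^sub>M out_law n) \<Otimes>\<^sub>M PY)"
    unfolding T_def h_def by (rule extend_prefix_null_part[OF S'])
  then have T_null: "T \<in> null_sets (step_law n)"
    using step_law_ac[OF msg_ac X_law] by (auto simp: absolutely_continuous_def)
  have "emeasure (msg_law (Suc n)) S = emeasure (step_law n) (extend_prefix n -` S \<inter> space (step_law n))"
    unfolding msg_law_Suc by (rule emeasure_distr[OF _ S']) measurable
  also have "\<dots> = emeasure (step_law n) T"
  proof (rule emeasure_eq_AE)
    show "AE p in step_law n. (p \<in> extend_prefix n -` S \<inter> space (step_law n)) = (p \<in> T)"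
      using h_ae by eventually_elim (auto simp: T_def step_law_def)
    show "extend_prefix n -` S \<inter> space (step_law n) \<in> sets (step_law n)"
      using measurable_sets[OF extend_prefix_measurable S'] by (simp add: step_law_def)
    show "T \<in> sets (step_law n)" using T by simp
  qed
  finally have "emeasure (msg_law (Suc n)) S = 0" using null_setsD1[OF T_null] by simp
  then show "S \<in> null_sets (msg_law (Suc n))" by (rule null_setsI) (use S' in simp)
qed

lemma msg_law_ac: "absolutely_continuous (lborel \<Otimes>\<^sub>M out_law n) (msg_law n)"
proof (induction n)
  case 0
  show ?case by (rule msg_law_ac_0)
next
  case (Suc n)
  show ?case by (rule msg_law_ac_Suc[OF Suc X_law[OF Suc]])
qed

end

theorem mainTheorem6:
  fixes M :: "'a measure" and PX :: "real measure" and K :: "real \<Rightarrow> real measure"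
    and A :: "real set" and \<Theta>0 :: "'a \<Rightarrow> real" and Y :: "nat \<Rightarrow> 'a \<Rightarrow> real"
    and X :: "nat \<Rightarrow> 'a \<Rightarrow> real" and Fpost :: "nat \<Rightarrow> (nat \<Rightarrow> real) \<Rightarrow> real \<Rightarrow> real"
  assumes M: "prob_space M"
    and PX: "prob_space PX" "sets PX = sets borel"
    and alphabet: "A \<in> sets borel" "K \<in> borel \<rightarrow>\<^sub>M subprob_algebra borel"
      "\<forall>x\<in>A. prob_space (K x)"
    and supp: "measure_support PX \<subseteq> A"
    and info: "finite_mutual_info PX K"
    and mixed: "ac_plus_discrete PX" "\<forall>x\<in>A. ac_plus_discrete (K x)"
      "ac_plus_discrete (PX \<bind> K)"
    and theta: "\<Theta>0 \<in> borel_measurable M"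
      "distr M borel \<Theta>0 = uniform_measure lborel {0<..<1}"
    and Ymeas: "\<forall>i. Y i \<in> borel_measurable M"
    and post_cdf: "\<forall>n y. mono (Fpost n y) \<and> (\<forall>\<theta>. continuous (at_right \<theta>) (Fpost n y))
        \<and> (Fpost n y \<longlongrightarrow> 0) at_bot \<and> (Fpost n y \<longlongrightarrow> 1) at_top"
    and post_meas: "\<forall>n \<theta>. (\<lambda>y. Fpost n y \<theta>) \<in> borel_measurable (Yspace n)"
    and posterior: "\<forall>n \<theta> B. B \<in> sets (Yspace n) \<longrightarrow>
        measure M {\<omega>\<in>space M. \<Theta>0 \<omega> \<le> \<theta> \<and> Yvec Y n \<omega> \<in> B}
        = (\<integral>\<omega>. indicator B (Yvec Y n \<omega>) * Fpost n (Yvec Y n \<omega>) \<theta> \<partial>M)"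
    and encoder: "\<forall>n \<omega>. X n \<omega> = quantile_fn (cdf PX) (Fpost n (Yvec Y n \<omega>) (\<Theta>0 \<omega>))"
    and channel: "\<forall>n B C. B \<in> sets (borel \<Otimes>\<^sub>M Yspace n) \<longrightarrow> C \<in> sets borel \<longrightarrow>
        emeasure M {\<omega>\<in>space M. (\<Theta>0 \<omega>, Yvec Y n \<omega>) \<in> B \<and> Y n \<omega> \<in> C}
        = (\<integral>\<^sup>+\<omega>. indicator B (\<Theta>0 \<omega>, Yvec Y n \<omega>) * emeasure (K (X n \<omega>)) C \<partial>M)"
  shows "\<forall>n. let U = (\<lambda>\<omega>. Fpost n (Yvec Y n \<omega>) (\<Theta>0 \<omega>)) in
      distr M borel U = uniform_measure lborel {0<..<1}
    \<and> distr M (borel \<Otimes>\<^sub>M Yspace n) (\<lambda>\<omega>. (U \<omega>, Yvec Y n \<omega>))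
        = distr M borel U \<Otimes>\<^sub>M distr M (Yspace n) (Yvec Y n)
    \<and> (\<exists>\<phi>\<in>borel_measurable (borel \<Otimes>\<^sub>M Yspace n). AE \<omega> in M. \<Theta>0 \<omega> = \<phi> (U \<omega>, Yvec Y n \<omega>))
    \<and> distr M borel (X n) = PX
    \<and> distr M (borel \<Otimes>\<^sub>M Yspace n) (\<lambda>\<omega>. (X n \<omega>, Yvec Y n \<omega>))
        = distr M borel (X n) \<Otimes>\<^sub>M distr M (Yspace n) (Yvec Y n)"
proof -
  interpret posterior_matching M PX K \<Theta>0 Y X Fpost
    by (intro posterior_matching.intro posterior_matching_axioms.intro)
      (use assms in \<open>auto simp: cdf_like_def\<close>)
  have U_eq: "(\<lambda>\<omega>. Fpost n (Yvec Y n \<omega>) (\<Theta>0 \<omega>)) = U n" for n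
    by (simp add: U_def fun_eq_iff)
  show ?thesis
    unfolding Let_def U_eq out_law_def[symmetric]
  proof (intro allI conjI)
    fix n
    show "distr M borel (U n) = Unif" by (rule U_uniform[OF msg_law_ac])
    then show "distr M (borel \<Otimes>\<^sub>M Yspace n) (\<lambda>\<omega>. (U n \<omega>, Yvec Y n \<omega>))
        = distr M borel (U n) \<Otimes>\<^sub>M out_law n"
      using U_Y_joint_law[OF msg_law_ac] by simp
    show "\<exists>\<phi>\<in>borel_measurable (borel \<Otimes>\<^sub>M Yspace n). AE \<omega> in M. \<Theta>0 \<omega> = \<phi> (U n \<omega>, Yvec Y n \<omega>)"
      using recover_measurable recovery[OF msg_law_ac] by blast
    show "distr M borel (X n) = PX" by (rule X_law[OF msg_law_ac])
    show "distr M (borel \<Otimes>\<^sub>M Yspace n) (\<lambda>\<omega>. (X n \<omega>, Yvec Y n \<omega>))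
        = distr M borel (X n) \<Otimes>\<^sub>M out_law n"
      by (rule X_Y_joint_law[OF msg_law_ac])
  qed
qed
end
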